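(* Let $X$ be a well-ordered set, $S\subseteq GDNP(X)$, and suppose the GDN-Poisson algebra $GDNP(X|S)=GDNP(X)/Id(S)$ satisfies the identity $x\circ(y\cdot z)=(x\circ y)\cdot z+(x\circ z)\cdot y$. Let $\theta:DGDNP(X)\to k\{X\}$ be the GDN-Poisson algebra homomorphism induced by $\theta(a)=a$, $a\in X$ (with $S$ mapped to $DGDNP(X)$ via the canonical projection). Then $GDNP(X|S)$ is isomorphic to $k\{X|\theta(S)\}$ both as GDN-Poisson algebras (with $f\circ g=fDg$ on $k\{X|\theta(S)\}$) and as commutative associative differential algebras (with derivation $f\mapsto e\circ f$ on $GDNP(X|S)$).
   Context: A GDN-Poisson algebra is a vector space with bilinear products $\cdot,\circ$ such that $(\cdot)$ is commutative associative with unit $e$, $x\circ(y\circ z)-(x\circ y)\circ z=y\circ(x\circ z)-(y\circ x)\circ z$, $(x\circ y)\circ z=(x\circ z)\circ y$, $(x\cdot y)\circ z=x\cdot(y\circ z)$, $(x\circ y)\cdot z-x\circ(y\cdot z)=(y\circ x)\cdot z-y\circ(x\cdot z)$. $GDNP(X)$ is the free GDN-Poisson algebra on $X$ and $Id(S)$ its ideal generated by $S$. $DGDNP(X)=GDNP(X)/Id(\lozenge)$ is the free GDN-Poisson algebra satisfying $x\circ(y\cdot z)=(x\circ y)\cdot z+(x\circ z)\cdot y$. $k\{X\}$ is the free commutative associative differential algebra over the field $k$ on $X$, with unit $e$ and one derivation $D$ ($De=0$); for $R\subseteq k\{X\}$, $k\{X|R\}$ is the quotient of $k\{X\}$ by the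 differential ideal generated by $R$. *)

theory Defs
  imports Main
begin

text \<open>One record type serves both for GDN-Poisson algebras (fields dt = \<cdot>, cc = \<circ>,
  un = e) and for commutative associative differential algebras (dt = product,
  un = e, dr = derivation D).  Fields irrelevant to a given kind of structure are
  simply ignored by the corresponding notions below.\<close>

record ('k, 'a) alg =
  car :: "'a set"
  pl  :: "'a \<Rightarrow> 'a \<Rightarrow> 'a"
  zr  :: "'a"
  sm  :: "'k \<Rightarrow> 'a \<Rightarrow> 'a"
  dt  :: "'a \<Rightarrow> 'a \<Rightarrow> 'a"
  cc  :: "'a \<Rightarrow> 'a \<Rightarrow> 'a"
  un  :: "'a"
  dr  :: "'a \<Rightarrow> 'a"

definition sub :: "('k::field, 'a) alg \<Rightarrow> 'a \<Rightarrow> 'a \<Rightarrow> 'a" where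
  "sub A a b = pl A a (sm A (-1) b)"

inductive_set gdnp_ideal :: "('k::field, 'a) alg \<Rightarrow> 'a set \<Rightarrow> 'a set"
  for A :: "('k, 'a) alg" and S :: "'a set" where
  gen: "s \<in> S \<Longrightarrow> s \<in> car A \<Longrightarrow> s \<in> gdnp_ideal A S"
| zero: "zr A \<in> gdnp_ideal A S"
| add: "a \<in> gdnp_ideal A S \<Longrightarrow> b \<in> gdnp_ideal A S \<Longrightarrow> pl A a b \<in> gdnp_ideal A S"
| smul: "a \<in> gdnp_ideal A S \<Longrightarrow> sm A c a \<in> gdnp_ideal A S"
| dotl: "a \<in> gdnp_ideal A S \<Longrightarrow> u \<in> car A \<Longrightarrow> dt A u a \<in> gdnp_ideal A S"
| dotr: "a \<in> gdnp_ideal A S \<Longrightarrow> u \<in> car A \<Longrightarrow> dt A a u \<in> gdnp_ideal A S"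
| circl: "a \<in> gdnp_ideal A S \<Longrightarrow> u \<in> car A \<Longrightarrow> cc A u a \<in> gdnp_ideal A S"
| circr: "a \<in> gdnp_ideal A S \<Longrightarrow> u \<in> car A \<Longrightarrow> cc A a u \<in> gdnp_ideal A S"

inductive_set diff_ideal :: "('k::field, 'a) alg \<Rightarrow> 'a set \<Rightarrow> 'a set"
  for A :: "('k, 'a) alg" and S :: "'a set" where
  gen: "s \<in> S \<Longrightarrow> s \<in> car A \<Longrightarrow> s \<in> diff_ideal A S"
| zero: "zr A \<in> diff_ideal A S"
| add: "a \<in> diff_ideal A S \<Longrightarrow> b \<in> diff_ideal A S \<Longrightarrow> pl A a b \<in> diff_ideal A S"
| smul: "a \<in> diff_ideal A S \<Longrightarrow> sm A c a \<in> diff_ideal A S"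
| dotl: "a \<in> diff_ideal A S \<Longrightarrow> u \<in> car A \<Longrightarrow> dt A u a \<in> diff_ideal A S"
| dotr: "a \<in> diff_ideal A S \<Longrightarrow> u \<in> car A \<Longrightarrow> dt A a u \<in> diff_ideal A S"
| der: "a \<in> diff_ideal A S \<Longrightarrow> dr A a \<in> diff_ideal A S"

definition cos :: "('k::field, 'a) alg \<Rightarrow> 'a set \<Rightarrow> 'a \<Rightarrow> 'a set" where
  "cos A I a = {b \<in> car A. sub A b a \<in> I}"

definition rep :: "'a set \<Rightarrow> 'a" where
  "rep U = (SOME a. a \<in> U)"

definition quot :: "('k::field, 'a) alg \<Rightarrow> 'a set \<Rightarrow> ('k, 'a set) alg" where
  "quot A I = \<lparr> car = cos A I ` car A,
                pl = (\<lambda>U V. cos A I (pl A (rep U) (rep V))),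
                zr = cos A I (zr A),
                sm = (\<lambda>c U. cos A I (sm A c (rep U))),
                dt = (\<lambda>U V. cos A I (dt A (rep U) (rep V))),
                cc = (\<lambda>U V. cos A I (cc A (rep U) (rep V))),
                un = cos A I (un A),
                dr = (\<lambda>U. cos A I (dr A (rep U))) \<rparr>"

definition lin_hom :: "('k::field, 'a) alg \<Rightarrow> ('k, 'b) alg \<Rightarrow> ('a \<Rightarrow> 'b) \<Rightarrow> bool" where
  "lin_hom A B h \<longleftrightarrow> (\<forall>a\<in>car A. h a \<in> car B)
     \<and> (\<forall>a\<in>car A. \<forall>b\<in>car A. h (pl A a b) = pl B (h a) (h b))
     \<and> (\<forall>c. \<forall>a\<in>car A. h (sm A c a) = sm B c (h a))"

definition gdnp_hom :: "('k::field, 'a) alg \<Rightarrow> ('k, 'b) alg \<Rightarrow> ('a \<Rightarrow> 'b) \<Rightarrow> bool" where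
  "gdnp_hom A B h \<longleftrightarrow> lin_hom A B h
     \<and> (\<forall>a\<in>car A. \<forall>b\<in>car A. h (dt A a b) = dt B (h a) (h b))
     \<and> (\<forall>a\<in>car A. \<forall>b\<in>car A. h (cc A a b) = cc B (h a) (h b))
     \<and> h (un A) = un B"

definition diff_hom :: "('k::field, 'a) alg \<Rightarrow> ('k, 'b) alg \<Rightarrow> ('a \<Rightarrow> 'b) \<Rightarrow> bool" where
  "diff_hom A B h \<longleftrightarrow> lin_hom A B h
     \<and> (\<forall>a\<in>car A. \<forall>b\<in>car A. h (dt A a b) = dt B (h a) (h b))
     \<and> (\<forall>a\<in>car A. h (dr A a) = dr B (h a))
     \<and> h (un A) = un B"

definition gdnp_as_diff :: "('k, 'a) alg \<Rightarrow> ('k, 'a) alg" where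
  "gdnp_as_diff A = A\<lparr>dr := (\<lambda>f. cc A (un A) f)\<rparr>"

datatype 'x bterm = BV 'x | BE | BDot "'x bterm" "'x bterm" | BCirc "'x bterm" "'x bterm"

text \<open>Its algebra: finitely supported k-linear combinations of terms,
  products extended bilinearly.\<close>
definition bimag :: "('k::field, 'x bterm \<Rightarrow> 'k) alg" where
  "bimag = \<lparr> car = {f. finite {t. f t \<noteq> 0}},
             pl = (\<lambda>f g t. f t + g t),
             zr = (\<lambda>t. 0),
             sm = (\<lambda>c f t. c * f t),
             dt = (\<lambda>f g t. case t of BDot a b \<Rightarrow> f a * g b | _ \<Rightarrow> 0),
             cc = (\<lambda>f g t. case t of BCirc a b \<Rightarrow> f a * g b | _ \<Rightarrow> 0),
             un = (\<lambda>t. if t = BE then 1 else 0),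
             dr = (\<lambda>f. f) \<rparr>"

text \<open>All instances of the defining identities of GDN-Poisson algebras.\<close>
definition gdnp_rels :: "('k::field, 'x bterm \<Rightarrow> 'k) alg \<Rightarrow> ('x bterm \<Rightarrow> 'k) set" where
  "gdnp_rels M = (\<Union>u\<in>car M. \<Union>v\<in>car M. \<Union>w\<in>car M.
     { sub M (dt M u v) (dt M v u),
       sub M (dt M (dt M u v) w) (dt M u (dt M v w)),
       sub M (dt M (un M) u) u,
       sub M (sub M (cc M u (cc M v w)) (cc M (cc M u v) w))
             (sub M (cc M v (cc M u w)) (cc M (cc M v u) w)),
       sub M (cc M (cc M u v) w) (cc M (cc M u w) v),
       sub M (cc M (dt M u v) w) (dt M u (cc M v w)),
       sub M (sub M (dt M (cc M u v) w) (cc M u (dt M v w)))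
             (sub M (dt M (cc M v u) w) (cc M v (dt M u w))) })"

definition GDNP :: "('k::field, ('x bterm \<Rightarrow> 'k) set) alg" where
  "GDNP = quot bimag (gdnp_ideal bimag (gdnp_rels bimag))"

definition gdnp_gen :: "'x \<Rightarrow> ('x bterm \<Rightarrow> 'k::field) set" where
  "gdnp_gen x = cos bimag (gdnp_ideal bimag (gdnp_rels bimag)) (\<lambda>t. if t = BV x then 1 else 0)"

definition GDNPq :: "('x bterm \<Rightarrow> 'k::field) set set \<Rightarrow> ('k, ('x bterm \<Rightarrow> 'k) set set) alg" where
  "GDNPq S = quot GDNP (gdnp_ideal GDNP S)"

definition lozenge :: "('k::field, 'a) alg \<Rightarrow> 'a set" where
  "lozenge A = {sub A (cc A x (dt A y z)) (pl A (dt A (cc A x y) z) (dt A (cc A x z) y)) | x y z.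
                 x \<in> car A \<and> y \<in> car A \<and> z \<in> car A}"

definition DGDNP :: "('k::field, ('x bterm \<Rightarrow> 'k) set set) alg" where
  "DGDNP = quot GDNP (gdnp_ideal GDNP (lozenge GDNP))"

definition dproj :: "('x bterm \<Rightarrow> 'k::field) set \<Rightarrow> ('x bterm \<Rightarrow> 'k) set set" where
  "dproj a = cos GDNP (gdnp_ideal GDNP (lozenge GDNP)) a"

definition dgen :: "'x \<Rightarrow> ('x bterm \<Rightarrow> 'k::field) set set" where
  "dgen x = dproj (gdnp_gen x)"

datatype 'x dterm = DV 'x | DE | DMul "'x dterm" "'x dterm" | DDer "'x dterm"

text \<open>Free algebra with one bilinear product and one linear operator; the field cc
  is the GDN-Poisson product f \<circ> g = f D g.\<close>
definition dmag :: "('k::field, 'x dterm \<Rightarrow> 'k) alg" where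
  "dmag = \<lparr> car = {f. finite {t. f t \<noteq> 0}},
            pl = (\<lambda>f g t. f t + g t),
            zr = (\<lambda>t. 0),
            sm = (\<lambda>c f t. c * f t),
            dt = (\<lambda>f g t. case t of DMul a b \<Rightarrow> f a * g b | _ \<Rightarrow> 0),
            cc = (\<lambda>f g t. case t of DMul a b \<Rightarrow> f a * (case b of DDer b' \<Rightarrow> g b' | _ \<Rightarrow> 0) | _ \<Rightarrow> 0),
            un = (\<lambda>t. if t = DE then 1 else 0),
            dr = (\<lambda>f t. case t of DDer a \<Rightarrow> f a | _ \<Rightarrow> 0) \<rparr>"

definition diff_rels :: "('k::field, 'x dterm \<Rightarrow> 'k) alg \<Rightarrow> ('x dterm \<Rightarrow> 'k) set" where
  "diff_rels M = (\<Union>u\<in>car M. \<Union>v\<in>car M. \<Union>w\<in>car M.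
     { sub M (dt M u v) (dt M v u),
       sub M (dt M (dt M u v) w) (dt M u (dt M v w)),
       sub M (dt M (un M) u) u,
       sub M (dr M (dt M u v)) (pl M (dt M (dr M u) v) (dt M u (dr M v))),
       dr M (un M) })"

definition kX :: "('k::field, ('x dterm \<Rightarrow> 'k) set) alg" where
  "kX = quot dmag (diff_ideal dmag (diff_rels dmag))"

definition kgen :: "'x \<Rightarrow> ('x dterm \<Rightarrow> 'k::field) set" where
  "kgen x = cos dmag (diff_ideal dmag (diff_rels dmag)) (\<lambda>t. if t = DV x then 1 else 0)"

definition kXR :: "('x dterm \<Rightarrow> 'k::field) set set \<Rightarrow> ('k, ('x dterm \<Rightarrow> 'k) set set) alg" where
  "kXR R = quot kX (diff_ideal kX R)"

end

theory Submission
  imports Defs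
begin

text \<open>Write Q for GDNP(X|S) and K for k{X|\<theta>(S)}. Composing \<theta> with the projections gives a
  homomorphism GDNP(X) \<rightarrow> K that kills S, hence \<phi> : Q \<rightarrow> K; it turns e \<circ> f into D f because
  e \<circ> f = e D f = D f in k{X}. Conversely, the assumed identity with x = e says that
  f \<mapsto> e \<circ> f is a derivation of the commutative algebra (Q, \<cdot>, e), and with x = y = z = e it
  gives e \<circ> e = 2 (e \<circ> e), i.e. D e = 0. So the freeness of k{X} yields \<psi> : K \<rightarrow> Q sending
  each generator to itself and D to e \<circ> _, and \<psi> respects \<circ> because u \<circ> v = u \<cdot> (e \<circ> v) holds
  in every GDN-Poisson algebra. Both composites fix the generators of a free algebra, so they are
  identities.

  Elements of GDNP(X) and k{X} are handled through representatives in the underlying free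
  magma algebras, finitely supported functions on terms.\<close>

text \<open>The consequences of multilinearity are phrased through differences so that they are
  equations between closed terms; such equations pass to surjective images, in particular to
  quotients.\<close>
locale lin_alg =
  fixes A :: "('k::field, 'a) alg"
  assumes zr_closed: "zr A \<in> car A" and un_closed: "un A \<in> car A"
    and pl_closed: "a \<in> car A \<Longrightarrow> b \<in> car A \<Longrightarrow> pl A a b \<in> car A"
    and dt_closed: "a \<in> car A \<Longrightarrow> b \<in> car A \<Longrightarrow> dt A a b \<in> car A"
    and cc_closed: "a \<in> car A \<Longrightarrow> b \<in> car A \<Longrightarrow> cc A a b \<in> car A"
    and sm_closed: "a \<in> car A \<Longrightarrow> sm A r a \<in> car A"
    and dr_closed: "a \<in> car A \<Longrightarrow> dr A a \<in> car A"
    and sub_self: "a \<in> car A \<Longrightarrow> sub A a a = zr A"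
    and sub_swap: "a \<in> car A \<Longrightarrow> b \<in> car A \<Longrightarrow> sub A b a = sm A (-1) (sub A a b)"
    and sub_trans: "a \<in> car A \<Longrightarrow> b \<in> car A \<Longrightarrow> c \<in> car A \<Longrightarrow>
      sub A a c = pl A (sub A a b) (sub A b c)"
    and sub_pl: "a \<in> car A \<Longrightarrow> b \<in> car A \<Longrightarrow> a' \<in> car A \<Longrightarrow> b' \<in> car A \<Longrightarrow>
      sub A (pl A a' b') (pl A a b) = pl A (sub A a' a) (sub A b' b)"
    and sub_sm: "a \<in> car A \<Longrightarrow> a' \<in> car A \<Longrightarrow> sub A (sm A r a') (sm A r a) = sm A r (sub A a' a)"
    and sub_dt: "a \<in> car A \<Longrightarrow> b \<in> car A \<Longrightarrow> a' \<in> car A \<Longrightarrow> b' \<in> car A \<Longrightarrow>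
      sub A (dt A a' b') (dt A a b) = pl A (dt A (sub A a' a) b') (dt A a (sub A b' b))"
    and sub_cc: "a \<in> car A \<Longrightarrow> b \<in> car A \<Longrightarrow> a' \<in> car A \<Longrightarrow> b' \<in> car A \<Longrightarrow>
      sub A (cc A a' b') (cc A a b) = pl A (cc A (sub A a' a) b') (cc A a (sub A b' b))"
    and sub_dr: "a \<in> car A \<Longrightarrow> a' \<in> car A \<Longrightarrow> sub A (dr A a') (dr A a) = dr A (sub A a' a)"
    and pl_sub_eq: "a \<in> car A \<Longrightarrow> b \<in> car A \<Longrightarrow> pl A b (sub A a b) = a"
    and sub_pl_cancel: "a \<in> car A \<Longrightarrow> b \<in> car A \<Longrightarrow> sub A (pl A a b) b = a"
    and pl_zr: "a \<in> car A \<Longrightarrow> pl A a (zr A) = a"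
    and sub_zr: "a \<in> car A \<Longrightarrow> sub A a (zr A) = a"
    and sm_zr: "sm A r (zr A) = zr A"
    and sm_0: "a \<in> car A \<Longrightarrow> sm A 0 a = zr A"
    and dt_zr_right: "a \<in> car A \<Longrightarrow> dt A a (zr A) = zr A"
    and dt_zr_left: "a \<in> car A \<Longrightarrow> dt A (zr A) a = zr A"
    and cc_zr_right: "a \<in> car A \<Longrightarrow> cc A a (zr A) = zr A"
    and cc_zr_left: "a \<in> car A \<Longrightarrow> cc A (zr A) a = zr A"
begin

lemma sub_closed: "a \<in> car A \<Longrightarrow> b \<in> car A \<Longrightarrow> sub A a b \<in> car A"
  unfolding sub_def by (simp add: pl_closed sm_closed)

end

definition alg_hom :: "('k::field, 'a) alg \<Rightarrow> ('k, 'b) alg \<Rightarrow> ('a \<Rightarrow> 'b) \<Rightarrow> bool" where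
  "alg_hom A B h \<longleftrightarrow> lin_hom A B h \<and> h (zr A) = zr B
     \<and> (\<forall>a\<in>car A. \<forall>b\<in>car A. h (dt A a b) = dt B (h a) (h b)) \<and> h (un A) = un B"

definition preserves_cc :: "('k::field, 'a) alg \<Rightarrow> ('k, 'b) alg \<Rightarrow> ('a \<Rightarrow> 'b) \<Rightarrow> bool" where
  "preserves_cc A B h \<longleftrightarrow> (\<forall>a\<in>car A. \<forall>b\<in>car A. h (cc A a b) = cc B (h a) (h b))"

definition intertwines_dr :: "('k::field, 'a) alg \<Rightarrow> ('b \<Rightarrow> 'b) \<Rightarrow> ('a \<Rightarrow> 'b) \<Rightarrow> bool" where
  "intertwines_dr A D h \<longleftrightarrow> (\<forall>a\<in>car A. h (dr A a) = D (h a))"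

lemma
  assumes "alg_hom A B h"
  shows alg_hom_closed: "a \<in> car A \<Longrightarrow> h a \<in> car B"
    and alg_hom_zr: "h (zr A) = zr B"
    and alg_hom_un: "h (un A) = un B"
    and alg_hom_pl: "a \<in> car A \<Longrightarrow> b \<in> car A \<Longrightarrow> h (pl A a b) = pl B (h a) (h b)"
    and alg_hom_dt: "a \<in> car A \<Longrightarrow> b \<in> car A \<Longrightarrow> h (dt A a b) = dt B (h a) (h b)"
    and alg_hom_sm: "a \<in> car A \<Longrightarrow> h (sm A c a) = sm B c (h a)"
  using assms unfolding alg_hom_def lin_hom_def by auto

lemma preserves_ccD:
  "preserves_cc A B h \<Longrightarrow> a \<in> car A \<Longrightarrow> b \<in> car A \<Longrightarrow> h (cc A a b) = cc B (h a) (h b)"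
  unfolding preserves_cc_def by blast

lemma intertwines_drD: "intertwines_dr A D h \<Longrightarrow> a \<in> car A \<Longrightarrow> h (dr A a) = D (h a)"
  unfolding intertwines_dr_def by blast

lemma alg_hom_sub:
  "alg_hom A B h \<Longrightarrow> lin_alg A \<Longrightarrow> a \<in> car A \<Longrightarrow> b \<in> car A \<Longrightarrow>
     h (sub A a b) = sub B (h a) (h b)"
  unfolding sub_def by (simp add: alg_hom_pl alg_hom_sm lin_alg.sm_closed)

lemma alg_hom_comp: "alg_hom A B h \<Longrightarrow> alg_hom B C g \<Longrightarrow> alg_hom A C (g \<circ> h)"
  unfolding alg_hom_def lin_hom_def by auto

lemma preserves_cc_comp:
  "alg_hom A B h \<Longrightarrow> preserves_cc A B h \<Longrightarrow> preserves_cc B C g \<Longrightarrow> preserves_cc A C (g \<circ> h)"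
  unfolding preserves_cc_def by (auto simp: alg_hom_closed)

lemma intertwines_dr_comp:
  "alg_hom A B h \<Longrightarrow> intertwines_dr A (dr B) h \<Longrightarrow> intertwines_dr B D g \<Longrightarrow>
     intertwines_dr A D (g \<circ> h)"
  unfolding intertwines_dr_def by (auto simp: alg_hom_closed)

lemma gdnp_homD:
  assumes "lin_alg A" "lin_alg B" "gdnp_hom A B h"
  shows "alg_hom A B h" "preserves_cc A B h"
proof -
  have z: "zr A \<in> car A" using assms(1) by (rule lin_alg.zr_closed)
  from assms(3) have h: "lin_hom A B h" unfolding gdnp_hom_def by blast
  have "h (zr A) = h (sm A 0 (zr A))" by (simp add: lin_alg.sm_0[OF assms(1) z])
  also have "\<dots> = sm B 0 (h (zr A))" using h z unfolding lin_hom_def by blast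
  also have "\<dots> = zr B" using h z lin_alg.sm_0[OF assms(2)] unfolding lin_hom_def by blast
  finally show "alg_hom A B h" using assms(3) unfolding gdnp_hom_def alg_hom_def by blast
  show "preserves_cc A B h" using assms(3) unfolding gdnp_hom_def preserves_cc_def by blast
qed

lemma gdnp_homI: "alg_hom A B h \<Longrightarrow> preserves_cc A B h \<Longrightarrow> gdnp_hom A B h"
  unfolding gdnp_hom_def alg_hom_def preserves_cc_def by blast

lemma diff_hom_gdnp_as_diffI:
  "alg_hom A B h \<Longrightarrow> intertwines_dr (gdnp_as_diff A) (dr B) h \<Longrightarrow> diff_hom (gdnp_as_diff A) B h"
  unfolding diff_hom_def alg_hom_def intertwines_dr_def gdnp_as_diff_def lin_hom_def by auto

lemma lin_alg_image:
  assumes "lin_alg A" and h: "alg_hom A B h" "preserves_cc A B h" "intertwines_dr A (dr B) h"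
    and onto: "h ` car A = car B"
  shows "lin_alg B"
proof -
  interpret A: lin_alg A by fact
  have F: "\<And>a b. a \<in> car A \<Longrightarrow> b \<in> car A \<Longrightarrow> pl B (h a) (h b) = h (pl A a b)"
    "\<And>a b. a \<in> car A \<Longrightarrow> b \<in> car A \<Longrightarrow> dt B (h a) (h b) = h (dt A a b)"
    "\<And>a b. a \<in> car A \<Longrightarrow> b \<in> car A \<Longrightarrow> cc B (h a) (h b) = h (cc A a b)"
    "\<And>a b. a \<in> car A \<Longrightarrow> b \<in> car A \<Longrightarrow> sub B (h a) (h b) = h (sub A a b)"
    "\<And>a c. a \<in> car A \<Longrightarrow> sm B c (h a) = h (sm A c a)"
    "\<And>a. a \<in> car A \<Longrightarrow> dr B (h a) = h (dr A a)"
    "zr B = h (zr A)" "un B = h (un A)"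
    using h \<open>lin_alg A\<close>
    by (auto simp: alg_hom_pl alg_hom_dt alg_hom_sm alg_hom_zr alg_hom_un alg_hom_sub
        preserves_ccD intertwines_drD)
  note closed = A.zr_closed A.un_closed A.pl_closed A.dt_closed A.cc_closed A.sm_closed
    A.dr_closed A.sub_closed
  note eqs = A.sub_self A.sub_swap A.sub_trans A.sub_pl A.sub_sm A.sub_dt A.sub_cc A.sub_dr
    A.pl_sub_eq A.sub_pl_cancel A.pl_zr A.sub_zr A.sm_zr A.sm_0 A.dt_zr_right A.dt_zr_left
    A.cc_zr_right A.cc_zr_left
  show ?thesis
    by (unfold_locales; (simp only: onto[symmetric])?; clarsimp simp: F closed; metis eqs closed)
qed

section \<open>Ideals and quotients\<close>

definition is_ideal :: "('k::field, 'a) alg \<Rightarrow> 'a set \<Rightarrow> bool" where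
  "is_ideal A I \<longleftrightarrow> I \<subseteq> car A \<and> zr A \<in> I
     \<and> (\<forall>a\<in>I. \<forall>b\<in>I. pl A a b \<in> I) \<and> (\<forall>a\<in>I. \<forall>c. sm A c a \<in> I)
     \<and> (\<forall>a\<in>I. \<forall>u\<in>car A. dt A u a \<in> I \<and> dt A a u \<in> I \<and> cc A u a \<in> I \<and> cc A a u \<in> I)
     \<and> (\<forall>a\<in>I. dr A a \<in> I)"

definition quot_lift :: "('a \<Rightarrow> 'b) \<Rightarrow> 'a set \<Rightarrow> 'b" where
  "quot_lift h U = h (rep U)"

context
  fixes A :: "('k::field, 'a) alg" and I :: "'a set"
  assumes lin: "lin_alg A" and ideal: "is_ideal A I"
begin

interpretation A: lin_alg A by (rule lin)

lemma
  shows ideal_zr: "zr A \<in> I"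
    and ideal_pl: "a \<in> I \<Longrightarrow> b \<in> I \<Longrightarrow> pl A a b \<in> I"
    and ideal_sm: "a \<in> I \<Longrightarrow> sm A c a \<in> I"
    and ideal_dt_left: "a \<in> I \<Longrightarrow> u \<in> car A \<Longrightarrow> dt A u a \<in> I"
    and ideal_dt_right: "a \<in> I \<Longrightarrow> u \<in> car A \<Longrightarrow> dt A a u \<in> I"
    and ideal_cc_left: "a \<in> I \<Longrightarrow> u \<in> car A \<Longrightarrow> cc A u a \<in> I"
    and ideal_cc_right: "a \<in> I \<Longrightarrow> u \<in> car A \<Longrightarrow> cc A a u \<in> I"
    and ideal_dr: "a \<in> I \<Longrightarrow> dr A a \<in> I"
  using ideal unfolding is_ideal_def by auto

lemma cos_eq_iff: "a \<in> car A \<Longrightarrow> b \<in> car A \<Longrightarrow> cos A I a = cos A I b \<longleftrightarrow> sub A a b \<in> I"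
proof
  assume a: "a \<in> car A" and b: "b \<in> car A"
  { assume "cos A I a = cos A I b"
    moreover have "a \<in> cos A I a" using a by (simp add: cos_def A.sub_self ideal_zr)
    ultimately show "sub A a b \<in> I" by (simp add: cos_def) }
  { assume ab: "sub A a b \<in> I"
    have ba: "sub A b a \<in> I" using A.sub_swap[OF a b] ab by (simp add: ideal_sm)
    have "sub A x a \<in> I \<longleftrightarrow> sub A x b \<in> I" if x: "x \<in> car A" for x
      using A.sub_trans[OF x a b] A.sub_trans[OF x b a] ab ba by (metis ideal_pl)
    then show "cos A I a = cos A I b" unfolding cos_def by blast }
qed

lemma
  assumes "a \<in> car A"
  shows rep_cos_closed: "rep (cos A I a) \<in> car A"
    and rep_cos_sub: "sub A (rep (cos A I a)) a \<in> I"
proof -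
  have "a \<in> cos A I a" using assms by (simp add: cos_def A.sub_self ideal_zr)
  hence "rep (cos A I a) \<in> cos A I a" unfolding rep_def by (rule someI)
  thus "rep (cos A I a) \<in> car A" "sub A (rep (cos A I a)) a \<in> I" by (auto simp: cos_def)
qed

lemma quot_car: "car (quot A I) = cos A I ` car A"
  by (simp add: quot_def)

lemma
  assumes a: "a \<in> car A" and b: "b \<in> car A"
  shows cos_pl: "cos A I (pl A a b) = pl (quot A I) (cos A I a) (cos A I b)"
    and cos_dt: "cos A I (dt A a b) = dt (quot A I) (cos A I a) (cos A I b)"
    and cos_cc: "cos A I (cc A a b) = cc (quot A I) (cos A I a) (cos A I b)"
    and cos_sm: "cos A I (sm A c a) = sm (quot A I) c (cos A I a)"
    and cos_dr: "cos A I (dr A a) = dr (quot A I) (cos A I a)"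
proof -
  let ?a = "rep (cos A I a)" and ?b = "rep (cos A I b)"
  have ra: "?a \<in> car A" "sub A ?a a \<in> I" and rb: "?b \<in> car A" "sub A ?b b \<in> I"
    using a b by (simp_all add: rep_cos_closed rep_cos_sub)
  have "sub A (pl A ?a ?b) (pl A a b) \<in> I"
    using A.sub_pl[OF a b ra(1) rb(1)] ra rb by (simp add: ideal_pl)
  thus "cos A I (pl A a b) = pl (quot A I) (cos A I a) (cos A I b)"
    using cos_eq_iff[of "pl A ?a ?b" "pl A a b"] a b ra rb A.pl_closed by (simp add: quot_def)
  have "sub A (dt A ?a ?b) (dt A a b) \<in> I"
    using A.sub_dt[OF a b ra(1) rb(1)] ra rb a by (simp add: ideal_pl ideal_dt_left ideal_dt_right)
  thus "cos A I (dt A a b) = dt (quot A I) (cos A I a) (cos A I b)"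
    using cos_eq_iff[of "dt A ?a ?b" "dt A a b"] a b ra rb A.dt_closed by (simp add: quot_def)
  have "sub A (cc A ?a ?b) (cc A a b) \<in> I"
    using A.sub_cc[OF a b ra(1) rb(1)] ra rb a by (simp add: ideal_pl ideal_cc_left ideal_cc_right)
  thus "cos A I (cc A a b) = cc (quot A I) (cos A I a) (cos A I b)"
    using cos_eq_iff[of "cc A ?a ?b" "cc A a b"] a b ra rb A.cc_closed by (simp add: quot_def)
  have "sub A (sm A c ?a) (sm A c a) \<in> I"
    using A.sub_sm[OF a ra(1)] ra by (simp add: ideal_sm)
  thus "cos A I (sm A c a) = sm (quot A I) c (cos A I a)"
    using cos_eq_iff[of "sm A c ?a" "sm A c a"] a ra A.sm_closed by (simp add: quot_def)
  have "sub A (dr A ?a) (dr A a) \<in> I"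
    using A.sub_dr[OF a ra(1)] ra by (simp add: ideal_dr)
  thus "cos A I (dr A a) = dr (quot A I) (cos A I a)"
    using cos_eq_iff[of "dr A ?a" "dr A a"] a ra A.dr_closed by (simp add: quot_def)
qed

lemma cos_alg_hom: "alg_hom A (quot A I) (cos A I)"
  unfolding alg_hom_def lin_hom_def by (auto simp: cos_pl cos_dt cos_sm) (simp_all add: quot_def)

lemma cos_preserves_cc: "preserves_cc A (quot A I) (cos A I)"
  unfolding preserves_cc_def by (simp add: cos_cc)

lemma cos_intertwines_dr: "intertwines_dr A (dr (quot A I)) (cos A I)"
  unfolding intertwines_dr_def by (simp add: cos_dr)

lemma lin_alg_quot: "lin_alg (quot A I)"
  by (rule lin_alg_image[OF lin cos_alg_hom cos_preserves_cc cos_intertwines_dr quot_car[symmetric]])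

lemma cos_eq_zr_iff: "a \<in> car A \<Longrightarrow> cos A I a = zr (quot A I) \<longleftrightarrow> a \<in> I"
  by (simp add: quot_def cos_eq_iff A.zr_closed A.sub_zr)

context
  fixes B :: "('k, 'b) alg" and h :: "'a \<Rightarrow> 'b"
  assumes lin_B: "lin_alg B" and h: "alg_hom A B h" and kernel: "\<And>a. a \<in> I \<Longrightarrow> h a = zr B"
begin

lemma quot_lift_cos: assumes a: "a \<in> car A" shows "quot_lift h (cos A I a) = h a"
proof -
  have "h b = h a" if b: "b \<in> car A" "sub A b a \<in> I" for b
  proof -
    have "h b = h (pl A a (sub A b a))" using A.pl_sub_eq[OF b(1) a] by simp
    also have "\<dots> = pl B (h a) (h (sub A b a))" using alg_hom_pl[OF h a A.sub_closed[OF b(1) a]] .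
    also have "\<dots> = h a" using kernel[OF b(2)] lin_alg.pl_zr[OF lin_B] alg_hom_closed[OF h a] by simp
    finally show ?thesis .
  qed
  then show ?thesis unfolding quot_lift_def using rep_cos_closed[OF a] rep_cos_sub[OF a] by blast
qed

lemma quot_lift_alg_hom: "alg_hom (quot A I) B (quot_lift h)"
  unfolding alg_hom_def lin_hom_def quot_car
proof (intro conjI ballI allI)
  show "quot_lift h (zr (quot A I)) = zr B"
    by (simp add: quot_def quot_lift_cos A.zr_closed alg_hom_zr[OF h])
  show "quot_lift h (un (quot A I)) = un B"
    by (simp add: quot_def quot_lift_cos A.un_closed alg_hom_un[OF h])
next
  fix U assume "U \<in> cos A I ` car A"
  then obtain a where a: "a \<in> car A" "U = cos A I a" by auto
  show "quot_lift h U \<in> car B" using a quot_lift_cos alg_hom_closed[OF h] by auto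
  fix c show "quot_lift h (sm (quot A I) c U) = sm B c (quot_lift h U)"
    using a by (simp flip: cos_sm add: quot_lift_cos A.sm_closed alg_hom_sm[OF h])
next
  fix U V assume "U \<in> cos A I ` car A" "V \<in> cos A I ` car A"
  then obtain a b where a: "a \<in> car A" "U = cos A I a" and b: "b \<in> car A" "V = cos A I b" by auto
  show "quot_lift h (pl (quot A I) U V) = pl B (quot_lift h U) (quot_lift h V)"
    using a b by (simp flip: cos_pl add: quot_lift_cos A.pl_closed alg_hom_pl[OF h])
  show "quot_lift h (dt (quot A I) U V) = dt B (quot_lift h U) (quot_lift h V)"
    using a b by (simp flip: cos_dt add: quot_lift_cos A.dt_closed alg_hom_dt[OF h])
qed

lemma quot_lift_preserves_cc:
  assumes "preserves_cc A B h" shows "preserves_cc (quot A I) B (quot_lift h)"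
  unfolding preserves_cc_def quot_car
  using assms by (auto simp flip: cos_cc simp: quot_lift_cos A.cc_closed preserves_ccD)

lemma quot_lift_intertwines_dr:
  assumes "intertwines_dr A D h" shows "intertwines_dr (quot A I) D (quot_lift h)"
  unfolding intertwines_dr_def quot_car
  using assms by (auto simp flip: cos_dr simp: quot_lift_cos A.dr_closed intertwines_drD)

end

end

lemma gdnp_ideal_subset: assumes "lin_alg A" shows "a \<in> gdnp_ideal A R \<Longrightarrow> a \<in> car A"
  by (induction rule: gdnp_ideal.induct)
    (auto intro: lin_alg.zr_closed[OF assms] lin_alg.pl_closed[OF assms] lin_alg.sm_closed[OF assms]
      lin_alg.dt_closed[OF assms] lin_alg.cc_closed[OF assms])

lemma diff_ideal_subset: assumes "lin_alg A" shows "a \<in> diff_ideal A R \<Longrightarrow> a \<in> car A"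
  by (induction rule: diff_ideal.induct)
    (auto intro: lin_alg.zr_closed[OF assms] lin_alg.pl_closed[OF assms] lin_alg.sm_closed[OF assms]
      lin_alg.dt_closed[OF assms] lin_alg.dr_closed[OF assms])

text \<open>GDN-Poisson structures ignore the derivation field, so closure under it has to come
  from a (junk) identity derivation.\<close>
lemma is_ideal_gdnp_ideal:
  assumes "lin_alg A" "\<And>a. a \<in> car A \<Longrightarrow> dr A a = a"
  shows "is_ideal A (gdnp_ideal A R)"
  unfolding is_ideal_def using assms gdnp_ideal_subset[OF assms(1)] by (auto intro: gdnp_ideal.intros)

lemma is_ideal_diff_ideal:
  assumes "lin_alg A" "\<And>a b. a \<in> car A \<Longrightarrow> b \<in> car A \<Longrightarrow> cc A a b = dt A a (dr A b)"
  shows "is_ideal A (diff_ideal A R)"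
  unfolding is_ideal_def using assms diff_ideal_subset[OF assms(1)]
  by (auto intro: diff_ideal.intros lin_alg.dr_closed)

lemma gdnp_ideal_kernel:
  assumes A: "lin_alg A" and B: "lin_alg B" and h: "alg_hom A B h" "preserves_cc A B h"
    and gen: "\<And>s. s \<in> R \<Longrightarrow> s \<in> car A \<Longrightarrow> h s = zr B"
  shows "a \<in> gdnp_ideal A R \<Longrightarrow> h a = zr B"
proof (induction rule: gdnp_ideal.induct)
  case (add a b) thus ?case
    using gdnp_ideal_subset[OF A] alg_hom_pl[OF h(1)] lin_alg.pl_zr[OF B] lin_alg.zr_closed[OF B] by metis
next
  case (smul a c) thus ?case using gdnp_ideal_subset[OF A] alg_hom_sm[OF h(1)] lin_alg.sm_zr[OF B] by metis
next
  case (dotl a u) thus ?case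
    using gdnp_ideal_subset[OF A] alg_hom_dt[OF h(1)] alg_hom_closed[OF h(1)] lin_alg.dt_zr_right[OF B] by metis
next
  case (dotr a u) thus ?case
    using gdnp_ideal_subset[OF A] alg_hom_dt[OF h(1)] alg_hom_closed[OF h(1)] lin_alg.dt_zr_left[OF B] by metis
next
  case (circl a u) thus ?case
    using gdnp_ideal_subset[OF A] preserves_ccD[OF h(2)] alg_hom_closed[OF h(1)] lin_alg.cc_zr_right[OF B] by metis
next
  case (circr a u) thus ?case
    using gdnp_ideal_subset[OF A] preserves_ccD[OF h(2)] alg_hom_closed[OF h(1)] lin_alg.cc_zr_left[OF B] by metis
qed (use gen alg_hom_zr[OF h(1)] in auto)

lemma diff_ideal_kernel:
  assumes A: "lin_alg A" and B: "lin_alg B" and h: "alg_hom A B h" "intertwines_dr A D h"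
    and D_zr: "D (zr B) = zr B" and gen: "\<And>s. s \<in> R \<Longrightarrow> s \<in> car A \<Longrightarrow> h s = zr B"
  shows "a \<in> diff_ideal A R \<Longrightarrow> h a = zr B"
proof (induction rule: diff_ideal.induct)
  case (add a b) thus ?case
    using diff_ideal_subset[OF A] alg_hom_pl[OF h(1)] lin_alg.pl_zr[OF B] lin_alg.zr_closed[OF B] by metis
next
  case (smul a c) thus ?case using diff_ideal_subset[OF A] alg_hom_sm[OF h(1)] lin_alg.sm_zr[OF B] by metis
next
  case (dotl a u) thus ?case
    using diff_ideal_subset[OF A] alg_hom_dt[OF h(1)] alg_hom_closed[OF h(1)] lin_alg.dt_zr_right[OF B] by metis
next
  case (dotr a u) thus ?case
    using diff_ideal_subset[OF A] alg_hom_dt[OF h(1)] alg_hom_closed[OF h(1)] lin_alg.dt_zr_left[OF B] by metis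
next
  case (der a) thus ?case using diff_ideal_subset[OF A] intertwines_drD[OF h(2)] D_zr by metis
qed (use gen alg_hom_zr[OF h(1)] in auto)

section \<open>The free magma algebras\<close>

definition delta :: "'a \<Rightarrow> 'a \<Rightarrow> 'k::field" where
  "delta s = (\<lambda>t. if t = s then 1 else 0)"

lemma finite_support_delta: "finite {t. delta s t \<noteq> (0::'k::field)}"
  by (rule finite_subset[of _ "{s}"]) (auto simp: delta_def)

lemma finite_support_add:
  "finite {t. f t \<noteq> (0::'k::field)} \<Longrightarrow> finite {t. g t \<noteq> 0} \<Longrightarrow> finite {t. f t + g t \<noteq> 0}"
  by (rule finite_subset[of _ "{t. f t \<noteq> 0} \<union> {t. g t \<noteq> 0}"]) auto

lemma finite_support_scale: "finite {t. f t \<noteq> (0::'k::field)} \<Longrightarrow> finite {t. c * f t \<noteq> 0}"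
  by (rule finite_subset[of _ "{t. f t \<noteq> 0}"]) auto

lemma finite_support_product:
  fixes f g :: "'a \<Rightarrow> 'k::field" and F :: "'b \<Rightarrow> 'k"
  assumes "finite {t. f t \<noteq> 0}" "finite {t. g t \<noteq> 0}"
    and "\<And>t. F t \<noteq> 0 \<Longrightarrow> \<exists>a b. t = C a b \<and> f a \<noteq> 0 \<and> g b \<noteq> 0"
  shows "finite {t. F t \<noteq> 0}"
proof (rule finite_subset)
  show "{t. F t \<noteq> 0} \<subseteq> (\<lambda>(a, b). C a b) ` ({t. f t \<noteq> 0} \<times> {t. g t \<noteq> 0})"
    using assms(3) by fastforce
qed (use assms(1,2) in auto)

lemma lin_alg_bimag: "lin_alg (bimag :: ('k::field, 'x bterm \<Rightarrow> 'k) alg)"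
proof -
  have prod: "finite {t. (case t of BDot a b \<Rightarrow> f a * g b | _ \<Rightarrow> 0) \<noteq> 0}"
    "finite {t. (case t of BCirc a b \<Rightarrow> f a * g b | _ \<Rightarrow> 0) \<noteq> 0}"
    if "finite {t. f t \<noteq> (0::'k)}" "finite {t. g t \<noteq> 0}" for f g :: "'x bterm \<Rightarrow> 'k"
    by (rule finite_support_product[where C=BDot, OF that] finite_support_product[where C=BCirc, OF that];
        simp split: bterm.splits)+
  have "finite {t. (if t = BE then 1 else 0) \<noteq> (0::'k)}"
    using finite_support_delta[of BE] by (simp add: delta_def)
  then show ?thesis
    by unfold_locales (simp_all add: bimag_def finite_support_add finite_support_scale prod
        sub_def fun_eq_iff algebra_simps split: bterm.split)
qed

lemma lin_alg_dmag: "lin_alg (dmag :: ('k::field, 'x dterm \<Rightarrow> 'k) alg)"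
proof -
  have der: "finite {t. (case t of DDer a \<Rightarrow> f a | _ \<Rightarrow> 0) \<noteq> 0}"
    if "finite {t. f t \<noteq> (0::'k)}" for f :: "'x dterm \<Rightarrow> 'k"
  proof (rule finite_subset[of _ "DDer ` {t. f t \<noteq> 0}"])
    show "{t. (case t of DDer a \<Rightarrow> f a | _ \<Rightarrow> 0) \<noteq> 0} \<subseteq> DDer ` {t. f t \<noteq> 0}"
      by (intro subsetI, case_tac x) auto
  qed (use that in auto)
  have mul: "finite {t. (case t of DMul a b \<Rightarrow> f a * g b | _ \<Rightarrow> 0) \<noteq> 0}"
    if "finite {t. f t \<noteq> (0::'k)}" "finite {t. g t \<noteq> 0}" for f g :: "'x dterm \<Rightarrow> 'k"
    by (rule finite_support_product[where C=DMul, OF that]) (simp split: dterm.splits)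
  have "finite {t. (case t of DMul a b \<Rightarrow> f a * (case b of DDer b' \<Rightarrow> g b' | _ \<Rightarrow> 0) | _ \<Rightarrow> 0) \<noteq> 0}"
    if "finite {t. f t \<noteq> (0::'k)}" "finite {t. g t \<noteq> 0}" for f g :: "'x dterm \<Rightarrow> 'k"
    using mul[OF that(1) der[OF that(2)]] by simp
  moreover have "finite {t. (if t = DE then 1 else 0) \<noteq> (0::'k)}"
    using finite_support_delta[of DE] by (simp add: delta_def)
  ultimately show ?thesis
    by unfold_locales (simp_all add: dmag_def finite_support_add finite_support_scale mul der
        sub_def fun_eq_iff algebra_simps split: dterm.split)
qed

lemma finsupp_hom_eqI:
  fixes M :: "('k::field, 'a \<Rightarrow> 'k) alg" and B :: "('k, 'b) alg"
  assumes car_M: "car M = {f. finite {t. f t \<noteq> 0}}" and pl_M: "pl M = (\<lambda>f g t. f t + g t)"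
    and sm_M: "sm M = (\<lambda>c f t. c * f t)" and zr_M: "zr M = (\<lambda>t. 0)"
    and g1: "alg_hom M B g1" and g2: "alg_hom M B g2" and deltas: "\<And>t. g1 (delta t) = g2 (delta t)"
    and f: "f \<in> car M"
  shows "g1 f = g2 f"
proof -
  have delta_car: "delta t \<in> car M" for t by (simp add: car_M finite_support_delta)
  have "\<forall>f. {t. f t \<noteq> 0} \<subseteq> F \<longrightarrow> g1 f = g2 f" if "finite F" for F
    using that
  proof (induction F rule: finite_induct)
    case empty
    have "g1 f = g2 f" if "{t. f t \<noteq> 0} \<subseteq> {}" for f :: "'a \<Rightarrow> 'k"
    proof -
      from that have "f = zr M" by (auto simp: zr_M fun_eq_iff)
      thus ?thesis by (simp add: alg_hom_zr[OF g1] alg_hom_zr[OF g2])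
    qed
    thus ?case by blast
  next
    case (insert x F)
    have "g1 f = g2 f" if supp: "{t. f t \<noteq> 0} \<subseteq> insert x F" for f :: "'a \<Rightarrow> 'k"
    proof -
      let ?f = "f(x := 0)"
      have supp': "{t. ?f t \<noteq> 0} \<subseteq> F" using supp by auto
      have car: "?f \<in> car M" "sm M (f x) (delta x) \<in> car M"
        using finite_subset[OF supp' insert(1)] finite_support_scale[OF finite_support_delta]
        by (simp_all add: car_M sm_M)
      have split: "f = pl M ?f (sm M (f x) (delta x))" by (auto simp: pl_M sm_M delta_def fun_eq_iff)
      have "g1 f = pl B (g1 ?f) (sm B (f x) (g1 (delta x)))"
        by (subst split) (simp add: alg_hom_pl[OF g1] alg_hom_sm[OF g1] car delta_car)
      also have "\<dots> = pl B (g2 ?f) (sm B (f x) (g2 (delta x)))"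
      proof -
        have "g1 ?f = g2 ?f" using insert(3) supp' by blast
        then show ?thesis by (simp only: deltas)
      qed
      also have "\<dots> = g2 f"
        by (subst (2) split) (simp add: alg_hom_pl[OF g2] alg_hom_sm[OF g2] car delta_car)
      finally show ?thesis .
    qed
    thus ?case by blast
  qed
  thus ?thesis using f car_M by auto
qed

lemma delta_bterm:
  "delta BE = un bimag" "delta (BDot a b) = dt bimag (delta a) (delta b)"
  "delta (BCirc a b) = cc bimag (delta a) (delta b)" "delta t \<in> car bimag"
  by (auto simp: delta_def bimag_def fun_eq_iff finite_support_delta split: bterm.split)

lemma delta_dterm:
  "delta DE = un dmag" "delta (DMul a b) = dt dmag (delta a) (delta b)"
  "delta (DDer a) = dr dmag (delta a)" "delta t \<in> car dmag"
  by (auto simp: delta_def dmag_def fun_eq_iff finite_support_delta split: dterm.split)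

lemma bimag_hom_eqI:
  assumes g1: "alg_hom bimag B g1" "preserves_cc bimag B g1"
    and g2: "alg_hom bimag B g2" "preserves_cc bimag B g2"
    and gens: "\<And>x. g1 (delta (BV x)) = g2 (delta (BV x))"
    and f: "f \<in> car (bimag :: ('k::field, 'x bterm \<Rightarrow> 'k) alg)"
  shows "g1 f = g2 f"
proof (rule finsupp_hom_eqI[OF _ _ _ _ g1(1) g2(1) _ f])
  show "g1 (delta t) = g2 (delta t)" for t :: "'x bterm"
    by (induction t) (simp_all add: gens delta_bterm alg_hom_un[OF g1(1)] alg_hom_un[OF g2(1)]
        alg_hom_dt[OF g1(1)] alg_hom_dt[OF g2(1)] preserves_ccD[OF g1(2)] preserves_ccD[OF g2(2)])
qed (simp_all add: bimag_def)

lemma dmag_hom_eqI: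
  assumes g1: "alg_hom dmag B g1" "intertwines_dr dmag D g1"
    and g2: "alg_hom dmag B g2" "intertwines_dr dmag D g2"
    and gens: "\<And>x. g1 (delta (DV x)) = g2 (delta (DV x))"
    and f: "f \<in> car (dmag :: ('k::field, 'x dterm \<Rightarrow> 'k) alg)"
  shows "g1 f = g2 f"
proof (rule finsupp_hom_eqI[OF _ _ _ _ g1(1) g2(1) _ f])
  show "g1 (delta t) = g2 (delta t)" for t :: "'x dterm"
    by (induction t) (simp_all add: gens delta_dterm alg_hom_un[OF g1(1)] alg_hom_un[OF g2(1)]
        alg_hom_dt[OF g1(1)] alg_hom_dt[OF g2(1)] intertwines_drD[OF g1(2)] intertwines_drD[OF g2(2)])
qed (simp_all add: dmag_def)

abbreviation gdnp_proj :: "('x bterm \<Rightarrow> 'k::field) \<Rightarrow> ('x bterm \<Rightarrow> 'k) set" where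
  "gdnp_proj \<equiv> cos bimag (gdnp_ideal bimag (gdnp_rels bimag))"

abbreviation kX_proj :: "('x dterm \<Rightarrow> 'k::field) \<Rightarrow> ('x dterm \<Rightarrow> 'k) set" where
  "kX_proj \<equiv> cos dmag (diff_ideal dmag (diff_rels dmag))"

lemma dr_bimag: "dr bimag a = a"
  by (simp add: bimag_def)

lemma is_ideal_bimag: "is_ideal (bimag :: ('k::field, 'x bterm \<Rightarrow> 'k) alg) (gdnp_ideal bimag R)"
  by (rule is_ideal_gdnp_ideal[OF lin_alg_bimag]) (simp add: dr_bimag)

lemma cc_dmag: "cc dmag a b = dt dmag a (dr dmag b)"
  by (simp add: dmag_def fun_eq_iff split: dterm.split)

lemma is_ideal_dmag: "is_ideal (dmag :: ('k::field, 'x dterm \<Rightarrow> 'k) alg) (diff_ideal dmag R)"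
  by (rule is_ideal_diff_ideal[OF lin_alg_dmag]) (simp add: cc_dmag)

lemma lin_alg_GDNP: "lin_alg (GDNP :: ('k::field, ('x bterm \<Rightarrow> 'k) set) alg)"
  unfolding GDNP_def by (rule lin_alg_quot[OF lin_alg_bimag is_ideal_bimag])

lemma lin_alg_kX: "lin_alg (kX :: ('k::field, ('x dterm \<Rightarrow> 'k) set) alg)"
  unfolding kX_def by (rule lin_alg_quot[OF lin_alg_dmag is_ideal_dmag])

lemma
  shows gdnp_proj_alg_hom: "alg_hom bimag (GDNP :: ('k::field, ('x bterm \<Rightarrow> 'k) set) alg) gdnp_proj"
    and gdnp_proj_preserves_cc: "preserves_cc bimag (GDNP :: ('k, ('x bterm \<Rightarrow> 'k) set) alg) gdnp_proj"
    and gdnp_proj_intertwines_dr: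
      "intertwines_dr bimag (dr (GDNP :: ('k, ('x bterm \<Rightarrow> 'k) set) alg)) gdnp_proj"
    and gdnp_proj_onto: "gdnp_proj ` car bimag = car (GDNP :: ('k, ('x bterm \<Rightarrow> 'k) set) alg)"
  unfolding GDNP_def
  by (rule cos_alg_hom[OF lin_alg_bimag is_ideal_bimag] cos_preserves_cc[OF lin_alg_bimag is_ideal_bimag]
      cos_intertwines_dr[OF lin_alg_bimag is_ideal_bimag] quot_car[OF lin_alg_bimag is_ideal_bimag, symmetric])+

lemma
  shows kX_proj_alg_hom: "alg_hom dmag (kX :: ('k::field, ('x dterm \<Rightarrow> 'k) set) alg) kX_proj"
    and kX_proj_preserves_cc: "preserves_cc dmag (kX :: ('k, ('x dterm \<Rightarrow> 'k) set) alg) kX_proj"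
    and kX_proj_intertwines_dr: "intertwines_dr dmag (dr (kX :: ('k, ('x dterm \<Rightarrow> 'k) set) alg)) kX_proj"
    and kX_proj_onto: "kX_proj ` car dmag = car (kX :: ('k, ('x dterm \<Rightarrow> 'k) set) alg)"
  unfolding kX_def
  by (rule cos_alg_hom[OF lin_alg_dmag is_ideal_dmag] cos_preserves_cc[OF lin_alg_dmag is_ideal_dmag]
      cos_intertwines_dr[OF lin_alg_dmag is_ideal_dmag] quot_car[OF lin_alg_dmag is_ideal_dmag, symmetric])+

lemma is_ideal_GDNP: "is_ideal (GDNP :: ('k::field, ('x bterm \<Rightarrow> 'k) set) alg) (gdnp_ideal GDNP R)"
proof (rule is_ideal_gdnp_ideal[OF lin_alg_GDNP])
  fix U :: "('x bterm \<Rightarrow> 'k) set" assume "U \<in> car GDNP"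
  then obtain a where "a \<in> car bimag" "U = gdnp_proj a" using gdnp_proj_onto by blast
  then show "dr GDNP U = U"
    using intertwines_drD[OF gdnp_proj_intertwines_dr] by (metis dr_bimag)
qed

lemma cc_kX:
  assumes "U \<in> car (kX :: ('k::field, ('x dterm \<Rightarrow> 'k) set) alg)" "V \<in> car (kX :: ('k, ('x dterm \<Rightarrow> 'k) set) alg)"
  shows "cc kX U V = dt kX U (dr kX V)"
proof -
  obtain a where a: "a \<in> car dmag" "U = kX_proj a" using assms(1) kX_proj_onto by blast
  obtain b where b: "b \<in> car dmag" "V = kX_proj b" using assms(2) kX_proj_onto by blast
  have "cc kX U V = kX_proj (cc dmag a b)" using preserves_ccD[OF kX_proj_preserves_cc a(1) b(1)] a b by simp
  also have "\<dots> = kX_proj (dt dmag a (dr dmag b))" by (simp add: cc_dmag)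
  also have "\<dots> = dt kX U (dr kX V)"
    using alg_hom_dt[OF kX_proj_alg_hom a(1) lin_alg.dr_closed[OF lin_alg_dmag b(1)]]
      intertwines_drD[OF kX_proj_intertwines_dr b(1)] a b by simp
  finally show ?thesis .
qed

lemma is_ideal_kX: "is_ideal (kX :: ('k::field, ('x dterm \<Rightarrow> 'k) set) alg) (diff_ideal kX R)"
  by (rule is_ideal_diff_ideal[OF lin_alg_kX]) (simp add: cc_kX)

lemma gdnp_proj_eq_if_rel:
  assumes "a \<in> car bimag" "b \<in> car bimag" "sub bimag a b \<in> gdnp_rels (bimag :: ('k::field, 'x bterm \<Rightarrow> 'k) alg)"
  shows "gdnp_proj a = gdnp_proj b"
  using assms lin_alg.sub_closed[OF lin_alg_bimag assms(1,2)]
  by (simp add: cos_eq_iff[OF lin_alg_bimag is_ideal_bimag] gdnp_ideal.gen)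

lemma gdnp_proj_dt_commute:
  assumes "u \<in> car bimag" "v \<in> car (bimag :: ('k::field, 'x bterm \<Rightarrow> 'k) alg)"
  shows "gdnp_proj (dt bimag u v) = gdnp_proj (dt bimag v u)"
  by (rule gdnp_proj_eq_if_rel) (simp_all add: assms lin_alg.dt_closed[OF lin_alg_bimag],
      unfold gdnp_rels_def, intro UN_I[OF assms(1)] UN_I[OF assms(2)] UN_I[OF assms(1)], simp)

lemma gdnp_proj_dt_assoc:
  assumes "u \<in> car bimag" "v \<in> car bimag" "w \<in> car (bimag :: ('k::field, 'x bterm \<Rightarrow> 'k) alg)"
  shows "gdnp_proj (dt bimag (dt bimag u v) w) = gdnp_proj (dt bimag u (dt bimag v w))"
  by (rule gdnp_proj_eq_if_rel) (simp_all add: assms lin_alg.dt_closed[OF lin_alg_bimag],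
      unfold gdnp_rels_def, intro UN_I[OF assms(1)] UN_I[OF assms(2)] UN_I[OF assms(3)], simp)

lemma gdnp_proj_un_dt:
  assumes "u \<in> car (bimag :: ('k::field, 'x bterm \<Rightarrow> 'k) alg)"
  shows "gdnp_proj (dt bimag (un bimag) u) = gdnp_proj u"
  by (rule gdnp_proj_eq_if_rel)
    (simp_all add: assms lin_alg.dt_closed[OF lin_alg_bimag] lin_alg.un_closed[OF lin_alg_bimag],
      unfold gdnp_rels_def, intro UN_I[OF assms] UN_I[OF assms] UN_I[OF assms], simp)

lemma gdnp_proj_dt_cc:
  assumes "u \<in> car bimag" "v \<in> car bimag" "w \<in> car (bimag :: ('k::field, 'x bterm \<Rightarrow> 'k) alg)"
  shows "gdnp_proj (cc bimag (dt bimag u v) w) = gdnp_proj (dt bimag u (cc bimag v w))"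
  by (rule gdnp_proj_eq_if_rel)
    (simp_all add: assms lin_alg.dt_closed[OF lin_alg_bimag] lin_alg.cc_closed[OF lin_alg_bimag],
      unfold gdnp_rels_def, intro UN_I[OF assms(1)] UN_I[OF assms(2)] UN_I[OF assms(3)], simp)

lemma kX_proj_un_dt:
  assumes "u \<in> car (dmag :: ('k::field, 'x dterm \<Rightarrow> 'k) alg)"
  shows "kX_proj (dt dmag (un dmag) u) = kX_proj u"
proof -
  have closed: "dt dmag (un dmag) u \<in> car dmag"
    by (rule lin_alg.dt_closed[OF lin_alg_dmag lin_alg.un_closed[OF lin_alg_dmag] assms])
  have "sub dmag (dt dmag (un dmag) u) u \<in> diff_rels dmag"
    unfolding diff_rels_def by (intro UN_I[OF assms] UN_I[OF assms] UN_I[OF assms]) simp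
  then have "sub dmag (dt dmag (un dmag) u) u \<in> diff_ideal dmag (diff_rels dmag)"
    using lin_alg.sub_closed[OF lin_alg_dmag closed assms] by (rule diff_ideal.gen)
  then show ?thesis by (simp add: cos_eq_iff[OF lin_alg_dmag is_ideal_dmag closed assms])
qed

definition GDNPq_proj ::
    "('x bterm \<Rightarrow> 'k::field) set set \<Rightarrow> ('x bterm \<Rightarrow> 'k) \<Rightarrow> ('x bterm \<Rightarrow> 'k) set set" where
  "GDNPq_proj S = cos GDNP (gdnp_ideal GDNP S) \<circ> gdnp_proj"

definition kXR_proj ::
    "('x dterm \<Rightarrow> 'k::field) set set \<Rightarrow> ('x dterm \<Rightarrow> 'k) \<Rightarrow> ('x dterm \<Rightarrow> 'k) set set" where
  "kXR_proj R = cos kX (diff_ideal kX R) \<circ> kX_proj"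

lemma lin_alg_GDNPq: "lin_alg (GDNPq S)"
  unfolding GDNPq_def by (rule lin_alg_quot[OF lin_alg_GDNP is_ideal_GDNP])

lemma lin_alg_kXR: "lin_alg (kXR R)"
  unfolding kXR_def by (rule lin_alg_quot[OF lin_alg_kX is_ideal_kX])

lemma
  shows GDNPq_proj_alg_hom: "alg_hom bimag (GDNPq S) (GDNPq_proj S)"
    and GDNPq_proj_preserves_cc: "preserves_cc bimag (GDNPq S) (GDNPq_proj S)"
    and GDNPq_proj_onto: "GDNPq_proj S ` car bimag = car (GDNPq S)"
proof -
  note cos_GDNP = cos_alg_hom[OF lin_alg_GDNP is_ideal_GDNP, folded GDNPq_def]
    cos_preserves_cc[OF lin_alg_GDNP is_ideal_GDNP, folded GDNPq_def]
    quot_car[OF lin_alg_GDNP is_ideal_GDNP, folded GDNPq_def]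
  show "alg_hom bimag (GDNPq S) (GDNPq_proj S)"
    unfolding GDNPq_proj_def by (rule alg_hom_comp[OF gdnp_proj_alg_hom cos_GDNP(1)])
  show "preserves_cc bimag (GDNPq S) (GDNPq_proj S)"
    unfolding GDNPq_proj_def
    by (rule preserves_cc_comp[OF gdnp_proj_alg_hom gdnp_proj_preserves_cc cos_GDNP(2)])
  show "GDNPq_proj S ` car bimag = car (GDNPq S)"
    unfolding GDNPq_proj_def image_comp[symmetric] gdnp_proj_onto by (rule cos_GDNP(3)[symmetric])
qed

lemma
  shows kXR_proj_alg_hom: "alg_hom dmag (kXR R) (kXR_proj R)"
    and kXR_proj_preserves_cc: "preserves_cc dmag (kXR R) (kXR_proj R)"
    and kXR_proj_intertwines_dr: "intertwines_dr dmag (dr (kXR R)) (kXR_proj R)"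
    and kXR_proj_onto: "kXR_proj R ` car dmag = car (kXR R)"
proof -
  note cos_kX = cos_alg_hom[OF lin_alg_kX is_ideal_kX, folded kXR_def]
    cos_preserves_cc[OF lin_alg_kX is_ideal_kX, folded kXR_def]
    cos_intertwines_dr[OF lin_alg_kX is_ideal_kX, folded kXR_def]
    quot_car[OF lin_alg_kX is_ideal_kX, folded kXR_def]
  show "alg_hom dmag (kXR R) (kXR_proj R)"
    unfolding kXR_proj_def by (rule alg_hom_comp[OF kX_proj_alg_hom cos_kX(1)])
  show "preserves_cc dmag (kXR R) (kXR_proj R)"
    unfolding kXR_proj_def by (rule preserves_cc_comp[OF kX_proj_alg_hom kX_proj_preserves_cc cos_kX(2)])
  show "intertwines_dr dmag (dr (kXR R)) (kXR_proj R)"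
    unfolding kXR_proj_def
    by (rule intertwines_dr_comp[OF kX_proj_alg_hom kX_proj_intertwines_dr cos_kX(3)])
  show "kXR_proj R ` car dmag = car (kXR R)"
    unfolding kXR_proj_def image_comp[symmetric] kX_proj_onto by (rule cos_kX(4)[symmetric])
qed

lemma GDNPq_proj_eqI: "gdnp_proj a = gdnp_proj b \<Longrightarrow> GDNPq_proj S a = GDNPq_proj S b"
  by (simp add: GDNPq_proj_def)

lemmas GDNPq_proj_hom = alg_hom_dt[OF GDNPq_proj_alg_hom] alg_hom_un[OF GDNPq_proj_alg_hom]
  preserves_ccD[OF GDNPq_proj_preserves_cc] lin_alg.dt_closed[OF lin_alg_bimag]
  lin_alg.cc_closed[OF lin_alg_bimag] lin_alg.un_closed[OF lin_alg_bimag]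

lemma GDNPq_dt_commute:
  assumes "u \<in> car (GDNPq S)" "v \<in> car (GDNPq S)"
  shows "dt (GDNPq S) u v = dt (GDNPq S) v u"
proof -
  obtain a where a: "a \<in> car bimag" "u = GDNPq_proj S a" using assms(1) GDNPq_proj_onto by blast
  obtain b where b: "b \<in> car bimag" "v = GDNPq_proj S b" using assms(2) GDNPq_proj_onto by blast
  show ?thesis using GDNPq_proj_eqI[OF gdnp_proj_dt_commute[OF a(1) b(1)]] a b by (simp add: GDNPq_proj_hom)
qed

lemma GDNPq_dt_assoc:
  assumes "u \<in> car (GDNPq S)" "v \<in> car (GDNPq S)" "w \<in> car (GDNPq S)"
  shows "dt (GDNPq S) (dt (GDNPq S) u v) w = dt (GDNPq S) u (dt (GDNPq S) v w)"
proof -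
  obtain a where a: "a \<in> car bimag" "u = GDNPq_proj S a" using assms(1) GDNPq_proj_onto by blast
  obtain b where b: "b \<in> car bimag" "v = GDNPq_proj S b" using assms(2) GDNPq_proj_onto by blast
  obtain c where c: "c \<in> car bimag" "w = GDNPq_proj S c" using assms(3) GDNPq_proj_onto by blast
  show ?thesis
    using GDNPq_proj_eqI[OF gdnp_proj_dt_assoc[OF a(1) b(1) c(1)]] a b c by (simp add: GDNPq_proj_hom)
qed

lemma GDNPq_un_dt:
  assumes "u \<in> car (GDNPq S)"
  shows "dt (GDNPq S) (un (GDNPq S)) u = u"
proof -
  obtain a where a: "a \<in> car bimag" "u = GDNPq_proj S a" using assms GDNPq_proj_onto by blast
  show ?thesis using GDNPq_proj_eqI[OF gdnp_proj_un_dt[OF a(1)]] a by (simp add: GDNPq_proj_hom)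
qed

lemma GDNPq_dt_cc:
  assumes "u \<in> car (GDNPq S)" "v \<in> car (GDNPq S)" "w \<in> car (GDNPq S)"
  shows "cc (GDNPq S) (dt (GDNPq S) u v) w = dt (GDNPq S) u (cc (GDNPq S) v w)"
proof -
  obtain a where a: "a \<in> car bimag" "u = GDNPq_proj S a" using assms(1) GDNPq_proj_onto by blast
  obtain b where b: "b \<in> car bimag" "v = GDNPq_proj S b" using assms(2) GDNPq_proj_onto by blast
  obtain c where c: "c \<in> car bimag" "w = GDNPq_proj S c" using assms(3) GDNPq_proj_onto by blast
  show ?thesis
    using GDNPq_proj_eqI[OF gdnp_proj_dt_cc[OF a(1) b(1) c(1)]] a b c by (simp add: GDNPq_proj_hom)
qed

lemma GDNPq_dt_un: "u \<in> car (GDNPq S) \<Longrightarrow> dt (GDNPq S) u (un (GDNPq S)) = u"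
  using GDNPq_dt_commute GDNPq_un_dt lin_alg.un_closed[OF lin_alg_GDNPq] by metis

lemma GDNPq_cc_eq_dt_cc_un:
  assumes "u \<in> car (GDNPq S)" "v \<in> car (GDNPq S)"
  shows "cc (GDNPq S) u v = dt (GDNPq S) u (cc (GDNPq S) (un (GDNPq S)) v)"
  using GDNPq_dt_cc[OF assms(1) lin_alg.un_closed[OF lin_alg_GDNPq] assms(2)] GDNPq_dt_un[OF assms(1)]
  by simp

lemmas kXR_proj_hom = alg_hom_dt[OF kXR_proj_alg_hom] alg_hom_un[OF kXR_proj_alg_hom]
  preserves_ccD[OF kXR_proj_preserves_cc] intertwines_drD[OF kXR_proj_intertwines_dr]

lemma kXR_cc_eq_dt_dr:
  assumes "a \<in> car (kXR R)" "b \<in> car (kXR R)"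
  shows "cc (kXR R) a b = dt (kXR R) a (dr (kXR R) b)"
proof -
  obtain f where f: "f \<in> car dmag" "a = kXR_proj R f" using assms(1) kXR_proj_onto by blast
  obtain g where g: "g \<in> car dmag" "b = kXR_proj R g" using assms(2) kXR_proj_onto by blast
  show ?thesis using f g
    by (simp flip: kXR_proj_hom add: cc_dmag lin_alg.dt_closed[OF lin_alg_dmag] lin_alg.dr_closed[OF lin_alg_dmag])
qed

lemma kXR_un_dt:
  assumes "a \<in> car (kXR R)"
  shows "dt (kXR R) (un (kXR R)) a = a"
proof -
  obtain f where f: "f \<in> car dmag" "a = kXR_proj R f" using assms kXR_proj_onto by blast
  have "dt (kXR R) (un (kXR R)) a = kXR_proj R (dt dmag (un dmag) f)"
    using f by (simp add: kXR_proj_hom lin_alg.un_closed[OF lin_alg_dmag])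
  also have "\<dots> = a" using f kX_proj_un_dt[OF f(1)] by (simp add: kXR_proj_def)
  finally show ?thesis .
qed

section \<open>Differential terms as GDN-Poisson terms\<close>

fun dterm_translate :: "'x dterm \<Rightarrow> 'x bterm \<Rightarrow> 'k::field" where
  "dterm_translate (DV x) = delta (BV x)"
| "dterm_translate DE = un bimag"
| "dterm_translate (DMul a b) = dt bimag (dterm_translate a) (dterm_translate b)"
| "dterm_translate (DDer a) = cc bimag (un bimag) (dterm_translate a)"

definition dmag_translate :: "('x dterm \<Rightarrow> 'k) \<Rightarrow> 'x bterm \<Rightarrow> 'k::field" where
  "dmag_translate g = (\<lambda>t. \<Sum>s\<in>{s. g s \<noteq> 0}. g s * dterm_translate s t)"

lemma dterm_translate_closed: "dterm_translate s \<in> car (bimag :: ('k::field, 'x bterm \<Rightarrow> 'k) alg)"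
  by (induction s) (simp_all add: delta_bterm lin_alg.un_closed[OF lin_alg_bimag]
      lin_alg.dt_closed[OF lin_alg_bimag] lin_alg.cc_closed[OF lin_alg_bimag])

lemma dmag_translate_eq_sum:
  "finite F \<Longrightarrow> {s. g s \<noteq> 0} \<subseteq> F \<Longrightarrow>
     dmag_translate g = (\<lambda>t. \<Sum>s\<in>F. g s * dterm_translate s t)"
  unfolding dmag_translate_def by (rule ext, rule sum.mono_neutral_left) auto

lemma dmag_translate_delta: "dmag_translate (delta s) = dterm_translate s"
proof -
  have "dmag_translate (delta s) = (\<lambda>t. \<Sum>r\<in>{s}. delta s r * dterm_translate r t)"
    by (rule dmag_translate_eq_sum) (auto simp: delta_def)
  thus ?thesis by (simp add: delta_def)
qed

context
  fixes g h :: "'x dterm \<Rightarrow> 'k::field"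
  assumes g: "g \<in> car dmag" and h: "h \<in> car dmag"
begin

lemma dmag_translate_closed: "dmag_translate g \<in> car bimag"
proof -
  let ?T = "\<Union>s\<in>{s. g s \<noteq> 0}. {t. dterm_translate s t \<noteq> (0::'k)}"
  have "finite {s. g s \<noteq> 0}" using g by (simp add: dmag_def)
  moreover have "finite {t. dterm_translate s t \<noteq> (0::'k)}" for s :: "'x dterm"
    using dterm_translate_closed[of s] by (simp add: bimag_def)
  ultimately have "finite ?T" by (intro finite_UN_I)
  moreover have "{t. dmag_translate g t \<noteq> 0} \<subseteq> ?T"
  proof
    fix t assume "t \<in> {t. dmag_translate g t \<noteq> 0}"
    then have "(\<Sum>s\<in>{s. g s \<noteq> 0}. g s * dterm_translate s t) \<noteq> 0" by (simp add: dmag_translate_def)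
    then obtain s where "s \<in> {s. g s \<noteq> 0}" "g s * dterm_translate s t \<noteq> 0"
      by (rule sum.not_neutral_contains_not_neutral)
    then show "t \<in> ?T" by auto
  qed
  ultimately have "finite {t. dmag_translate g t \<noteq> 0}" by (rule finite_subset[rotated])
  then show ?thesis by (simp add: bimag_def)
qed

lemma dmag_translate_pl: "dmag_translate (pl dmag g h) = pl bimag (dmag_translate g) (dmag_translate h)"
proof -
  let ?F = "{s. g s \<noteq> 0} \<union> {s. h s \<noteq> 0}"
  have F: "finite ?F" using g h by (simp add: dmag_def)
  have "dmag_translate (pl dmag g h) = (\<lambda>t. \<Sum>s\<in>?F. pl dmag g h s * dterm_translate s t)"
    by (rule dmag_translate_eq_sum[OF F]) (auto simp: dmag_def)
  moreover have "dmag_translate g = (\<lambda>t. \<Sum>s\<in>?F. g s * dterm_translate s t)"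
    by (rule dmag_translate_eq_sum[OF F]) auto
  moreover have "dmag_translate h = (\<lambda>t. \<Sum>s\<in>?F. h s * dterm_translate s t)"
    by (rule dmag_translate_eq_sum[OF F]) auto
  ultimately show ?thesis by (simp add: bimag_def dmag_def fun_eq_iff distrib_right sum.distrib)
qed

lemma dmag_translate_sm: "dmag_translate (sm dmag c g) = sm bimag c (dmag_translate g)"
proof -
  have fin: "finite {s. g s \<noteq> 0}" using g by (simp add: dmag_def)
  have "dmag_translate (sm dmag c g) = (\<lambda>t. \<Sum>s\<in>{s. g s \<noteq> 0}. sm dmag c g s * dterm_translate s t)"
    by (rule dmag_translate_eq_sum[OF fin]) (auto simp: dmag_def)
  thus ?thesis by (simp add: bimag_def dmag_def dmag_translate_def fun_eq_iff sum_distrib_left mult.assoc)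
qed

lemma dmag_translate_dt: "dmag_translate (dt dmag g h) = dt bimag (dmag_translate g) (dmag_translate h)"
proof -
  let ?G = "{s. g s \<noteq> 0}" and ?H = "{s. h s \<noteq> 0}"
  have fin: "finite ?G" "finite ?H" using g h by (simp_all add: dmag_def)
  have inj: "inj_on (\<lambda>(a, b). DMul a b) (?G \<times> ?H)" by (auto simp: inj_on_def)
  have supp: "{s. dt dmag g h s \<noteq> 0} \<subseteq> (\<lambda>(a, b). DMul a b) ` (?G \<times> ?H)"
    by (intro subsetI, case_tac x) (auto simp: dmag_def image_iff)
  have "dmag_translate (dt dmag g h)
      = (\<lambda>t. \<Sum>s\<in>(\<lambda>(a, b). DMul a b) ` (?G \<times> ?H). dt dmag g h s * dterm_translate s t)"
    using fin by (intro dmag_translate_eq_sum[OF _ supp]) simp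
  also have "\<dots> = (\<lambda>t. \<Sum>p\<in>?G \<times> ?H. g (fst p) * h (snd p)
                 * dt bimag (dterm_translate (fst p)) (dterm_translate (snd p)) t)"
    by (subst sum.reindex[OF inj]) (auto simp: dmag_def intro!: sum.cong)
  also have "\<dots> = dt bimag (dmag_translate g) (dmag_translate h)"
  proof (rule ext)
    fix t show "(\<Sum>p\<in>?G \<times> ?H. g (fst p) * h (snd p) * dt bimag (dterm_translate (fst p)) (dterm_translate (snd p)) t)
      = dt bimag (dmag_translate g) (dmag_translate h) t"
    proof (cases t)
      case (BDot x y)
      have "dt bimag (dmag_translate g) (dmag_translate h) t
          = (\<Sum>a\<in>?G. g a * dterm_translate a x) * (\<Sum>b\<in>?H. h b * dterm_translate b y)"
        by (simp add: BDot bimag_def dmag_translate_def)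
      also have "\<dots> = (\<Sum>p\<in>?G \<times> ?H. (g (fst p) * dterm_translate (fst p) x) * (h (snd p) * dterm_translate (snd p) y))"
        by (simp add: sum_product sum.cartesian_product case_prod_beta)
      finally show ?thesis by (simp add: BDot bimag_def mult_ac)
    qed (simp_all add: bimag_def)
  qed
  finally show ?thesis .
qed

lemma dmag_translate_dr: "dmag_translate (dr dmag g) = cc bimag (un bimag) (dmag_translate g)"
proof -
  let ?G = "{s. g s \<noteq> 0}"
  have fin: "finite ?G" using g by (simp add: dmag_def)
  have supp: "{s. dr dmag g s \<noteq> 0} \<subseteq> DDer ` ?G"
    by (intro subsetI, case_tac x) (auto simp: dmag_def image_iff)
  have "dmag_translate (dr dmag g) = (\<lambda>t. \<Sum>s\<in>DDer ` ?G. dr dmag g s * dterm_translate s t)"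
    using fin by (intro dmag_translate_eq_sum[OF _ supp]) simp
  also have "\<dots> = (\<lambda>t. \<Sum>a\<in>?G. g a * cc bimag (un bimag) (dterm_translate a) t)"
    by (subst sum.reindex) (auto simp: inj_on_def dmag_def intro!: sum.cong)
  also have "\<dots> = cc bimag (un bimag) (dmag_translate g)"
    by (rule ext, case_tac t) (simp_all add: bimag_def dmag_translate_def sum_distrib_left mult_ac)
  finally show ?thesis .
qed

end

lemma dmag_translate_alg_hom: "alg_hom dmag bimag (dmag_translate :: ('x dterm \<Rightarrow> 'k::field) \<Rightarrow> _)"
proof -
  have "dmag_translate (zr dmag) = (zr bimag :: 'x bterm \<Rightarrow> 'k)"
    by (simp add: dmag_translate_def dmag_def bimag_def fun_eq_iff)
  moreover have "dmag_translate (un dmag) = (un bimag :: 'x bterm \<Rightarrow> 'k)"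
    using dmag_translate_delta[of DE] by (simp add: delta_dterm)
  ultimately show ?thesis
    unfolding alg_hom_def lin_hom_def
    by (simp add: dmag_translate_closed dmag_translate_pl dmag_translate_sm dmag_translate_dt)
qed

section \<open>The isomorphism\<close>

lemma lin_alg_DGDNP: "lin_alg DGDNP"
  unfolding DGDNP_def by (rule lin_alg_quot[OF lin_alg_GDNP is_ideal_GDNP])

lemma dproj_eq: "dproj = cos GDNP (gdnp_ideal GDNP (lozenge GDNP))"
  by (simp add: dproj_def fun_eq_iff)

lemma
  shows dproj_alg_hom: "alg_hom GDNP (DGDNP :: ('k::field, ('x bterm \<Rightarrow> 'k) set set) alg) dproj"
    and dproj_preserves_cc: "preserves_cc GDNP (DGDNP :: ('k, ('x bterm \<Rightarrow> 'k) set set) alg) dproj"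
  unfolding dproj_eq DGDNP_def
  by (rule cos_alg_hom[OF lin_alg_GDNP is_ideal_GDNP] cos_preserves_cc[OF lin_alg_GDNP is_ideal_GDNP])+

locale leibniz_gdnp_quotient =
  fixes S :: "('x bterm \<Rightarrow> 'k::field) set set"
    and \<theta> :: "('x bterm \<Rightarrow> 'k) set set \<Rightarrow> ('x dterm \<Rightarrow> 'k) set"
  assumes S_sub: "S \<subseteq> car (GDNP :: ('k, ('x bterm \<Rightarrow> 'k) set) alg)"
    and ident: "\<forall>x\<in>car (GDNPq S). \<forall>y\<in>car (GDNPq S). \<forall>z\<in>car (GDNPq S).
        cc (GDNPq S) x (dt (GDNPq S) y z)
          = pl (GDNPq S) (dt (GDNPq S) (cc (GDNPq S) x y) z) (dt (GDNPq S) (cc (GDNPq S) x z) y)"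
    and theta_hom: "gdnp_hom DGDNP kX \<theta>"
    and theta_gen: "\<forall>a. \<theta> (dgen a) = kgen a"
begin

abbreviation "Q \<equiv> GDNPq S"
abbreviation "e \<equiv> un (GDNPq S)"
abbreviation "R \<equiv> \<theta> ` dproj ` S"
abbreviation "K \<equiv> kXR (\<theta> ` dproj ` S)"
abbreviation "proj_K \<equiv> cos kX (diff_ideal kX (\<theta> ` dproj ` S))"

lemma e_closed: "e \<in> car Q"
  by (rule lin_alg.un_closed[OF lin_alg_GDNPq])

lemma Q_leibniz:
  assumes "u \<in> car Q" "v \<in> car Q"
  shows "cc Q e (dt Q u v) = pl Q (dt Q (cc Q e u) v) (dt Q u (cc Q e v))"
  using ident e_closed assms
    GDNPq_dt_commute[OF lin_alg.cc_closed[OF lin_alg_GDNPq e_closed assms(2)] assms(1)]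
  by simp

lemma Q_cc_un_un: "cc Q e e = zr Q"
proof -
  let ?c = "cc Q e e"
  have c: "?c \<in> car Q" by (rule lin_alg.cc_closed[OF lin_alg_GDNPq e_closed e_closed])
  have "?c = pl Q ?c ?c"
    using ident e_closed GDNPq_un_dt[OF e_closed] GDNPq_dt_un[OF c] by metis
  then have "sub Q ?c ?c = ?c" using lin_alg.sub_pl_cancel[OF lin_alg_GDNPq c c] by simp
  thus ?thesis using lin_alg.sub_self[OF lin_alg_GDNPq c] by simp
qed

lemma
  shows theta_alg_hom: "alg_hom DGDNP kX \<theta>"
    and theta_preserves_cc: "preserves_cc DGDNP kX \<theta>"
  using gdnp_homD[OF lin_alg_DGDNP lin_alg_kX theta_hom] by blast+

definition theta_bimag :: "('x bterm \<Rightarrow> 'k) \<Rightarrow> ('x dterm \<Rightarrow> 'k) set" where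
  "theta_bimag = \<theta> \<circ> dproj \<circ> gdnp_proj"

lemma
  shows theta_bimag_alg_hom: "alg_hom bimag kX theta_bimag"
    and theta_bimag_preserves_cc: "preserves_cc bimag kX theta_bimag"
proof -
  have "alg_hom bimag DGDNP (dproj \<circ> gdnp_proj)"
    by (rule alg_hom_comp[OF gdnp_proj_alg_hom dproj_alg_hom])
  moreover have "preserves_cc bimag DGDNP (dproj \<circ> gdnp_proj)"
    by (rule preserves_cc_comp[OF gdnp_proj_alg_hom gdnp_proj_preserves_cc dproj_preserves_cc])
  ultimately show "alg_hom bimag kX theta_bimag" "preserves_cc bimag kX theta_bimag"
    unfolding theta_bimag_def comp_assoc
    by (auto intro: alg_hom_comp[OF _ theta_alg_hom] preserves_cc_comp[OF _ _ theta_preserves_cc])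
qed

lemma theta_bimag_delta: "theta_bimag (delta (BV x)) = kX_proj (delta (DV x))"
  using theta_gen by (simp add: theta_bimag_def delta_def dgen_def gdnp_gen_def kgen_def)

definition phi :: "('x bterm \<Rightarrow> 'k) set set \<Rightarrow> ('x dterm \<Rightarrow> 'k) set set" where
  "phi = quot_lift (proj_K \<circ> \<theta> \<circ> dproj)"

lemma
  shows proj_K_alg_hom: "alg_hom kX K proj_K"
    and proj_K_preserves_cc: "preserves_cc kX K proj_K"
  unfolding kXR_def
  by (rule cos_alg_hom[OF lin_alg_kX is_ideal_kX] cos_preserves_cc[OF lin_alg_kX is_ideal_kX])+

lemma
  shows to_K_alg_hom: "alg_hom GDNP K (proj_K \<circ> \<theta> \<circ> dproj)"
    and to_K_preserves_cc: "preserves_cc GDNP K (proj_K \<circ> \<theta> \<circ> dproj)"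
proof -
  have "alg_hom GDNP kX (\<theta> \<circ> dproj)" by (rule alg_hom_comp[OF dproj_alg_hom theta_alg_hom])
  moreover have "preserves_cc GDNP kX (\<theta> \<circ> dproj)"
    by (rule preserves_cc_comp[OF dproj_alg_hom dproj_preserves_cc theta_preserves_cc])
  ultimately show "alg_hom GDNP K (proj_K \<circ> \<theta> \<circ> dproj)" "preserves_cc GDNP K (proj_K \<circ> \<theta> \<circ> dproj)"
    unfolding comp_assoc
    by (auto intro: alg_hom_comp[OF _ proj_K_alg_hom] preserves_cc_comp[OF _ _ proj_K_preserves_cc])
qed

lemma to_K_kernel: "a \<in> gdnp_ideal GDNP S \<Longrightarrow> (proj_K \<circ> \<theta> \<circ> dproj) a = zr K"
proof (rule gdnp_ideal_kernel[OF lin_alg_GDNP lin_alg_kXR to_K_alg_hom to_K_preserves_cc])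
  fix s assume s: "s \<in> S" "s \<in> car GDNP"
  have r: "\<theta> (dproj s) \<in> car kX"
    using alg_hom_closed[OF theta_alg_hom alg_hom_closed[OF dproj_alg_hom s(2)]] .
  have "\<theta> (dproj s) \<in> diff_ideal kX R" using s(1) r by (blast intro: diff_ideal.gen)
  then show "(proj_K \<circ> \<theta> \<circ> dproj) s = zr K"
    using cos_eq_zr_iff[OF lin_alg_kX is_ideal_kX r] by (simp add: kXR_def)
qed

lemma
  shows phi_alg_hom: "alg_hom Q K phi"
    and phi_preserves_cc: "preserves_cc Q K phi"
    and phi_cos: "a \<in> car GDNP \<Longrightarrow> phi (cos GDNP (gdnp_ideal GDNP S) a) = proj_K (\<theta> (dproj a))"
proof -
  note lift = lin_alg_GDNP is_ideal_GDNP[of S] lin_alg_kXR to_K_alg_hom to_K_kernel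
  show "alg_hom Q K phi" unfolding phi_def GDNPq_def by (rule quot_lift_alg_hom[OF lift])
  show "preserves_cc Q K phi"
    unfolding phi_def GDNPq_def by (rule quot_lift_preserves_cc[OF lift to_K_preserves_cc])
  show "a \<in> car GDNP \<Longrightarrow> phi (cos GDNP (gdnp_ideal GDNP S) a) = proj_K (\<theta> (dproj a))"
    unfolding phi_def using quot_lift_cos[OF lift, of a] by (simp add: comp_def)
qed

lemma phi_GDNPq_proj: "f \<in> car bimag \<Longrightarrow> phi (GDNPq_proj S f) = proj_K (theta_bimag f)"
  using phi_cos[OF alg_hom_closed[OF gdnp_proj_alg_hom]] by (simp add: GDNPq_proj_def theta_bimag_def)

lemma phi_cc_un: assumes "Z \<in> car Q" shows "phi (cc Q e Z) = dr K (phi Z)"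
proof -
  have phi_Z: "phi Z \<in> car K" by (rule alg_hom_closed[OF phi_alg_hom assms])
  have "phi (cc Q e Z) = cc K (un K) (phi Z)"
    using preserves_ccD[OF phi_preserves_cc e_closed assms] alg_hom_un[OF phi_alg_hom] by simp
  also have "\<dots> = dt K (un K) (dr K (phi Z))"
    by (rule kXR_cc_eq_dt_dr[OF lin_alg.un_closed[OF lin_alg_kXR] phi_Z])
  also have "\<dots> = dr K (phi Z)"
    by (rule kXR_un_dt[OF lin_alg.dr_closed[OF lin_alg_kXR phi_Z]])
  finally show ?thesis .
qed


definition psi_dmag :: "('x dterm \<Rightarrow> 'k) \<Rightarrow> ('x bterm \<Rightarrow> 'k) set set" where
  "psi_dmag = GDNPq_proj S \<circ> dmag_translate"

lemma psi_dmag_alg_hom: "alg_hom dmag Q psi_dmag"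
  unfolding psi_dmag_def by (rule alg_hom_comp[OF dmag_translate_alg_hom GDNPq_proj_alg_hom])

lemma psi_dmag_intertwines_dr: "intertwines_dr dmag (cc Q e) psi_dmag"
  unfolding intertwines_dr_def psi_dmag_def
  by (simp add: dmag_translate_dr dmag_translate_closed lin_alg.un_closed[OF lin_alg_bimag]
      preserves_ccD[OF GDNPq_proj_preserves_cc] alg_hom_un[OF GDNPq_proj_alg_hom])

text \<open>The defining relations of k{X} hold in (Q, \<cdot>, e, e \<circ> _); only the Leibniz rule and
  D e = 0 need the hypothesis on Q.\<close>
lemma psi_dmag_diff_rels: assumes "s \<in> diff_rels dmag" shows "psi_dmag s = zr Q"
proof -
  obtain u v w where uvw: "u \<in> car dmag" "v \<in> car dmag" "w \<in> car dmag" and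
    s: "s \<in> {sub dmag (dt dmag u v) (dt dmag v u),
       sub dmag (dt dmag (dt dmag u v) w) (dt dmag u (dt dmag v w)),
       sub dmag (dt dmag (un dmag) u) u,
       sub dmag (dr dmag (dt dmag u v)) (pl dmag (dt dmag (dr dmag u) v) (dt dmag u (dr dmag v))),
       dr dmag (un dmag)}"
    using assms unfolding diff_rels_def by blast
  note closed = uvw lin_alg.dt_closed[OF lin_alg_dmag] lin_alg.dr_closed[OF lin_alg_dmag]
    lin_alg.pl_closed[OF lin_alg_dmag] lin_alg.un_closed[OF lin_alg_dmag]
  note hom = alg_hom_dt[OF psi_dmag_alg_hom] alg_hom_pl[OF psi_dmag_alg_hom] alg_hom_un[OF psi_dmag_alg_hom]
    intertwines_drD[OF psi_dmag_intertwines_dr] alg_hom_closed[OF psi_dmag_alg_hom]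
  have kill: "psi_dmag (sub dmag a b) = zr Q" if "a \<in> car dmag" "b \<in> car dmag" "psi_dmag a = psi_dmag b" for a b
    using that by (simp add: alg_hom_sub[OF psi_dmag_alg_hom lin_alg_dmag] alg_hom_closed[OF psi_dmag_alg_hom]
        lin_alg.sub_self[OF lin_alg_GDNPq])
  have Q_closed: "psi_dmag a \<in> car Q" if "a \<in> car dmag" for a
    using alg_hom_closed[OF psi_dmag_alg_hom that] .
  from s show ?thesis
  proof (elim insertE emptyE)
    assume "s = sub dmag (dt dmag u v) (dt dmag v u)"
    moreover have "psi_dmag (dt dmag u v) = psi_dmag (dt dmag v u)"
      using GDNPq_dt_commute[OF Q_closed Q_closed] uvw by (simp add: closed hom)
    ultimately show ?thesis by (simp add: kill closed)
  next
    assume "s = sub dmag (dt dmag (dt dmag u v) w) (dt dmag u (dt dmag v w))"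
    moreover have "psi_dmag (dt dmag (dt dmag u v) w) = psi_dmag (dt dmag u (dt dmag v w))"
      using GDNPq_dt_assoc[OF Q_closed Q_closed Q_closed] uvw by (simp add: closed hom)
    ultimately show ?thesis by (simp add: kill closed)
  next
    assume "s = sub dmag (dt dmag (un dmag) u) u"
    moreover have "psi_dmag (dt dmag (un dmag) u) = psi_dmag u"
      using GDNPq_un_dt[OF Q_closed] uvw by (simp add: closed hom)
    ultimately show ?thesis by (simp add: kill closed)
  next
    assume "s = sub dmag (dr dmag (dt dmag u v)) (pl dmag (dt dmag (dr dmag u) v) (dt dmag u (dr dmag v)))"
    moreover have "psi_dmag (dr dmag (dt dmag u v))
        = psi_dmag (pl dmag (dt dmag (dr dmag u) v) (dt dmag u (dr dmag v)))"
      using Q_leibniz[OF Q_closed Q_closed] uvw by (simp add: closed hom)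
    ultimately show ?thesis by (simp add: kill closed)
  next
    assume "s = dr dmag (un dmag)"
    then show ?thesis using Q_cc_un_un by (simp add: closed hom)
  qed
qed

definition psi_kX :: "('x dterm \<Rightarrow> 'k) set \<Rightarrow> ('x bterm \<Rightarrow> 'k) set set" where
  "psi_kX = quot_lift psi_dmag"

lemma
  shows psi_kX_alg_hom: "alg_hom kX Q psi_kX"
    and psi_kX_intertwines_dr: "intertwines_dr kX (cc Q e) psi_kX"
    and psi_kX_kX_proj: "g \<in> car dmag \<Longrightarrow> psi_kX (kX_proj g) = psi_dmag g"
proof -
  have kernel: "psi_dmag a = zr Q" if "a \<in> diff_ideal dmag (diff_rels dmag)" for a
    by (rule diff_ideal_kernel[OF lin_alg_dmag lin_alg_GDNPq psi_dmag_alg_hom psi_dmag_intertwines_dr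
          lin_alg.cc_zr_right[OF lin_alg_GDNPq e_closed] psi_dmag_diff_rels that])
  note lift = lin_alg_dmag is_ideal_dmag[of "diff_rels dmag"] lin_alg_GDNPq psi_dmag_alg_hom kernel
  show "alg_hom kX Q psi_kX" unfolding psi_kX_def kX_def by (rule quot_lift_alg_hom[OF lift])
  show "intertwines_dr kX (cc Q e) psi_kX"
    unfolding psi_kX_def kX_def by (rule quot_lift_intertwines_dr[OF lift psi_dmag_intertwines_dr])
  show "g \<in> car dmag \<Longrightarrow> psi_kX (kX_proj g) = psi_dmag g"
    unfolding psi_kX_def by (rule quot_lift_cos[OF lift])
qed

lemma psi_kX_preserves_cc: "preserves_cc kX Q psi_kX"
  unfolding preserves_cc_def
proof (intro ballI)
  fix U V :: "('x dterm \<Rightarrow> 'k) set" assume U: "U \<in> car kX" and V: "V \<in> car kX"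
  have "psi_kX (cc kX U V) = dt Q (psi_kX U) (cc Q e (psi_kX V))"
    using alg_hom_dt[OF psi_kX_alg_hom U lin_alg.dr_closed[OF lin_alg_kX V]]
      intertwines_drD[OF psi_kX_intertwines_dr V]
    by (simp add: cc_kX U V)
  also have "\<dots> = cc Q (psi_kX U) (psi_kX V)"
    using GDNPq_cc_eq_dt_cc_un[OF alg_hom_closed[OF psi_kX_alg_hom U] alg_hom_closed[OF psi_kX_alg_hom V]]
    by simp
  finally show "psi_kX (cc kX U V) = cc Q (psi_kX U) (psi_kX V)" .
qed

lemma psi_kX_theta_bimag: assumes "f \<in> car bimag" shows "psi_kX (theta_bimag f) = GDNPq_proj S f"
proof -
  have "(psi_kX \<circ> theta_bimag) f = GDNPq_proj S f"
  proof (rule bimag_hom_eqI[OF _ _ GDNPq_proj_alg_hom GDNPq_proj_preserves_cc _ assms])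
    show "alg_hom bimag Q (psi_kX \<circ> theta_bimag)"
      by (rule alg_hom_comp[OF theta_bimag_alg_hom psi_kX_alg_hom])
    show "preserves_cc bimag Q (psi_kX \<circ> theta_bimag)"
      by (rule preserves_cc_comp[OF theta_bimag_alg_hom theta_bimag_preserves_cc psi_kX_preserves_cc])
    show "(psi_kX \<circ> theta_bimag) (delta (BV x)) = GDNPq_proj S (delta (BV x))" for x
      by (simp add: theta_bimag_delta psi_kX_kX_proj delta_dterm psi_dmag_def dmag_translate_delta)
  qed
  then show ?thesis by simp
qed


lemma psi_kX_kernel: "r \<in> diff_ideal kX R \<Longrightarrow> psi_kX r = zr Q"
proof (rule diff_ideal_kernel[OF lin_alg_kX lin_alg_GDNPq psi_kX_alg_hom psi_kX_intertwines_dr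
      lin_alg.cc_zr_right[OF lin_alg_GDNPq e_closed]])
  fix r assume "r \<in> R"
  then obtain s where s: "s \<in> S" "r = \<theta> (dproj s)" by blast
  obtain f where f: "f \<in> car bimag" "s = gdnp_proj f" using s(1) S_sub gdnp_proj_onto by blast
  have "psi_kX r = GDNPq_proj S f"
    using psi_kX_theta_bimag[OF f(1)] s f by (simp add: theta_bimag_def)
  also have "\<dots> = cos GDNP (gdnp_ideal GDNP S) s" by (simp add: GDNPq_proj_def f)
  also have "\<dots> = zr Q"
    using cos_eq_zr_iff[OF lin_alg_GDNP is_ideal_GDNP] gdnp_ideal.gen s(1) S_sub
    by (fastforce simp: GDNPq_def)
  finally show "psi_kX r = zr Q" .
qed

definition psi :: "('x dterm \<Rightarrow> 'k) set set \<Rightarrow> ('x bterm \<Rightarrow> 'k) set set" where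
  "psi = quot_lift psi_kX"

lemma
  shows psi_alg_hom: "alg_hom K Q psi"
    and psi_proj_K: "U \<in> car kX \<Longrightarrow> psi (proj_K U) = psi_kX U"
proof -
  note lift = lin_alg_kX is_ideal_kX[of R] lin_alg_GDNPq psi_kX_alg_hom psi_kX_kernel
  show "alg_hom K Q psi" unfolding psi_def kXR_def by (rule quot_lift_alg_hom[OF lift])
  show "U \<in> car kX \<Longrightarrow> psi (proj_K U) = psi_kX U" unfolding psi_def by (rule quot_lift_cos[OF lift])
qed

lemma psi_phi: assumes "Z \<in> car Q" shows "psi (phi Z) = Z"
proof -
  obtain f where f: "f \<in> car bimag" "Z = GDNPq_proj S f" using assms GDNPq_proj_onto by blast
  then show ?thesis
    by (simp add: phi_GDNPq_proj psi_proj_K alg_hom_closed[OF theta_bimag_alg_hom] psi_kX_theta_bimag)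
qed

lemma phi_psi: assumes "W \<in> car K" shows "phi (psi W) = W"
proof -
  obtain g where g: "g \<in> car dmag" "W = kXR_proj R g" using assms kXR_proj_onto by blast
  have "(phi \<circ> psi_dmag) g = kXR_proj R g"
  proof (rule dmag_hom_eqI[OF _ _ kXR_proj_alg_hom kXR_proj_intertwines_dr _ g(1)])
    show "alg_hom dmag K (phi \<circ> psi_dmag)" by (rule alg_hom_comp[OF psi_dmag_alg_hom phi_alg_hom])
    show "intertwines_dr dmag (dr K) (phi \<circ> psi_dmag)"
      using psi_dmag_intertwines_dr phi_cc_un alg_hom_closed[OF psi_dmag_alg_hom]
      by (simp add: intertwines_dr_def)
    show "(phi \<circ> psi_dmag) (delta (DV x)) = kXR_proj R (delta (DV x))" for x
      using phi_GDNPq_proj[OF delta_bterm(4)]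
      by (simp add: psi_dmag_def dmag_translate_delta theta_bimag_delta kXR_proj_def)
  qed
  then show ?thesis
    using g by (simp add: kXR_proj_def psi_proj_K alg_hom_closed[OF kX_proj_alg_hom] psi_kX_kX_proj)
qed

lemma phi_bij: "bij_betw phi (car Q) (car K)"
  by (rule bij_betw_byWitness[where f' = psi])
    (auto simp: psi_phi phi_psi alg_hom_closed[OF phi_alg_hom] alg_hom_closed[OF psi_alg_hom])

end

theorem mainTheorem7:
  fixes S :: "('x::wellorder bterm \<Rightarrow> 'k::field) set set"
    and \<theta> :: "('x bterm \<Rightarrow> 'k) set set \<Rightarrow> ('x dterm \<Rightarrow> 'k) set"
  assumes S_sub: "S \<subseteq> car (GDNP :: ('k, ('x bterm \<Rightarrow> 'k) set) alg)"
    and ident: "\<forall>x\<in>car (GDNPq S). \<forall>y\<in>car (GDNPq S). \<forall>z\<in>car (GDNPq S).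
        cc (GDNPq S) x (dt (GDNPq S) y z)
          = pl (GDNPq S) (dt (GDNPq S) (cc (GDNPq S) x y) z) (dt (GDNPq S) (cc (GDNPq S) x z) y)"
    and theta_hom: "gdnp_hom DGDNP kX \<theta>"
    and theta_gen: "\<forall>a. \<theta> (dgen a) = kgen a"
  shows "\<exists>\<phi>. bij_betw \<phi> (car (GDNPq S)) (car (kXR (\<theta> ` dproj ` S)))
           \<and> gdnp_hom (GDNPq S) (kXR (\<theta> ` dproj ` S)) \<phi>
           \<and> diff_hom (gdnp_as_diff (GDNPq S)) (kXR (\<theta> ` dproj ` S)) \<phi>"
proof -
  interpret leibniz_gdnp_quotient S \<theta>
    using assms by unfold_locales
  have "gdnp_hom Q K phi" by (rule gdnp_homI[OF phi_alg_hom phi_preserves_cc])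
  moreover have "diff_hom (gdnp_as_diff Q) K phi"
    using phi_cc_un
    by (intro diff_hom_gdnp_as_diffI[OF phi_alg_hom]) (simp add: intertwines_dr_def gdnp_as_diff_def)
  ultimately show ?thesis using phi_bij by blast
qed

end
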